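(* Let $k\ge1$, $n=2^k$, and let $A$ be the $n\times n$ de Bruijn matrix. Then: (1) $\frac{1}{2\log n}\le\phi(A)\le\frac{8}{\log n}$; (2) $A$ is doubly stochastic, the eigenvalue $1$ is simple, and all other eigenvalues of $A$ are $0$; (3) $\Gamma(n)\le\frac{8}{\log n}$; (4) there is a real orthogonal matrix $U$ such that $U^TAU$ is a Jordan normal form of $A$, consisting of one block of size $1$ for eigenvalue $1$ and, for eigenvalue $0$, exactly $2^{k-1-r}$ Jordan blocks of size $r$ for each $r\in\{1,\dots,k-1\}$ and exactly one Jordan block of size $k$; (5) $A$ has $n/2$ singular values equal to $1$ and $n/2$ singular values equal to $0$.
   Context: Logarithms are base $2$. The de Bruijn matrix has rows and columns indexed by $\{0,1\}^k$; for $a=a_1a_2\cdots a_k$, $A_{b,a}=\frac12$ if $b\in\{a_2\cdots a_k0,\ a_2\cdots a_k1\}$ and $A_{b,a}=0$ otherwise. For a doubly stochastic $M$, $\phi(M)=\min_{S:\,1\le|S|\le n/2}\frac1{|S|}\sum_{i\in S,j\notin S}M_{i,j}$. $\Gamma(n)=\inf_M\phi(M)/(1-\operatorname{Re}\lambda_2(M))$ over all $n\times n$ doubly stochastic $M$, where $\lambda_2(M)$ is an eigenvalue of largest real part among the eigenvalues of $M$ remaining after removing one copy of the eigenvalue $1$ (counted with multiplicity), with the convention $x/0=+\infty$. *)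

theory Defs
  imports "Jordan_Normal_Form.Jordan_Normal_Form" "HOL-Library.Extended_Real"
begin

text \<open>Index a bit string a_1 a_2 ... a_k by the natural number sum a_i 2^(k-i)
  (a_1 most significant).  Then a_2...a_k x corresponds to (2a mod 2^k) + x.\<close>
definition de_bruijn :: "nat \<Rightarrow> real mat" where
  "de_bruijn k = mat (2^k) (2^k)
     (\<lambda>(b, a). if b = (2 * a) mod 2^k \<or> b = (2 * a) mod 2^k + 1 then 1/2 else 0)"

definition doubly_stochastic :: "nat \<Rightarrow> real mat \<Rightarrow> bool" where
  "doubly_stochastic n M \<longleftrightarrow> M \<in> carrier_mat n n
     \<and> (\<forall>i<n. \<forall>j<n. M $$ (i, j) \<ge> 0)
     \<and> (\<forall>i<n. (\<Sum>j<n. M $$ (i, j)) = 1)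
     \<and> (\<forall>j<n. (\<Sum>i<n. M $$ (i, j)) = 1)"

definition edge_expansion :: "real mat \<Rightarrow> real" where
  "edge_expansion M = (let n = dim_row M in
     Min {(1 / real (card S)) * (\<Sum>i\<in>S. \<Sum>j\<in>{0..<n} - S. M $$ (i, j)) | S.
            S \<subseteq> {0..<n} \<and> 1 \<le> card S \<and> real (card S) \<le> real n / 2})"

definition eigenvalues_mset :: "real mat \<Rightarrow> complex multiset" where
  "eigenvalues_mset M = proots (char_poly (map_mat complex_of_real M))"

definition re_lambda2 :: "real mat \<Rightarrow> real" where
  "re_lambda2 M = Max (Re ` set_mset (eigenvalues_mset M - {#1#}))"

definition Gamma :: "nat \<Rightarrow> ereal" where
  "Gamma n = (INF M \<in> {M. doubly_stochastic n M}.
     (if 1 - re_lambda2 M = 0 then \<infinity> else ereal (edge_expansion M / (1 - re_lambda2 M))))"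

text \<open>Singular values: square roots of the eigenvalues of A^T A (which are real and nonnegative),
  with multiplicity.\<close>
definition singular_values :: "real mat \<Rightarrow> real multiset" where
  "singular_values A = image_mset (\<lambda>z. sqrt (Re z)) (eigenvalues_mset (transpose_mat A * A))"

end

theory Submission
  imports Defs
begin

(* Expansion: the cut weight of a set is subadditive under products of doubly stochastic
  kernels, and A^k is the uniform kernel, whose cut weight at S is |S| (n - |S|) / n >= |S| / 2;
  hence k cut(S) >= |S| / 2.  The upper bound is witnessed by the strings carrying a short
  marker word near their top.

  Spectrum: the Walsh characters chi_t, t < n, form an orthogonal basis with A chi_t = chi_(2t)
  for t < n/2 and A chi_t = 0 otherwise, while A^T chi_(2t) = chi_t and A^T kills the odd
  characters.  Listing the characters along the chains 2^(r-1) w, ..., 2 w, w (w odd) turns A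
  into its Jordan form, and the same basis diagonalises A^T A with entry 1 exactly for t < n/2.
  So every eigenvalue but one is 0, which also gives Gamma(n) <= phi(A). *)

section \<open>The de Bruijn kernel\<close>

definition de_bruijn_fun :: "nat \<Rightarrow> nat \<Rightarrow> nat \<Rightarrow> real" where
  "de_bruijn_fun k b a = (if b div 2 = a mod 2^(k-1) then 1/2 else 0)"

lemma double_mod_two_power:
  assumes "k \<ge> 1"
  shows "(2 * a) mod (2::nat)^k = 2 * (a mod 2^(k-1))"
proof -
  obtain k' where k: "k = Suc k'" using assms by (cases k) auto
  have "(2 * a) mod (2 * 2^k') = 2 * (a mod 2^k')" by (metis mult_mod_right)
  then show ?thesis unfolding k by simp
qed

lemma de_bruijn_carrier: "de_bruijn k \<in> carrier_mat (2^k) (2^k)"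
  unfolding de_bruijn_def by (rule mat_carrier)

lemma de_bruijn_index:
  assumes "k \<ge> 1" "b < 2^k" "a < 2^k"
  shows "de_bruijn k $$ (b, a) = de_bruijn_fun k b a"
proof -
  have div_two_iff: "(b = 2 * c \<or> b = 2 * c + 1) \<longleftrightarrow> b div 2 = c" for c :: nat
    by presburger
  have "(b = (2 * a) mod 2^k \<or> b = (2 * a) mod 2^k + 1) \<longleftrightarrow> b div 2 = a mod 2^(k-1)"
    unfolding double_mod_two_power[OF assms(1)] by (rule div_two_iff)
  then show ?thesis
    using assms by (simp add: de_bruijn_def de_bruijn_fun_def)
qed

lemma de_bruijn_fun_nonneg: "de_bruijn_fun k b a \<ge> 0"
  unfolding de_bruijn_fun_def by simp

lemma mod_two_power_preimage:
  assumes "c < (2::nat)^k"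
  shows "{a \<in> {..<2^Suc k}. a mod 2^k = c} = {c, c + 2^k}"
proof -
  have "a = c \<or> a = c + 2^k" if "a < 2^Suc k" "a mod 2^k = c" for a
  proof -
    have "a div 2^k < 2" using that(1) by (simp add: less_mult_imp_div_less mult.commute)
    then have "a div 2^k = 0 \<or> a div 2^k = 1" by linarith
    then show ?thesis using that(2) div_mult_mod_eq[of a "2^k"] by auto
  qed
  then show ?thesis using assms by auto
qed

lemma sum_de_bruijn_fun_row:
  assumes "b < 2^Suc k"
  shows "(\<Sum>a<2^Suc k. de_bruijn_fun (Suc k) b a * g a) = (g (b div 2) + g (b div 2 + 2^k)) / 2"
proof -
  have c: "b div 2 < 2^k" using assms by (simp add: less_mult_imp_div_less)
  have "(\<Sum>a<2^Suc k. de_bruijn_fun (Suc k) b a * g a)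
      = (\<Sum>a<2^Suc k. if a mod 2^k = b div 2 then g a / 2 else 0)"
    by (rule sum.cong) (auto simp: de_bruijn_fun_def)
  also have "\<dots> = (\<Sum>a\<in>{a \<in> {..<2^Suc k}. a mod 2^k = b div 2}. g a / 2)"
    by (rule sum.inter_filter[symmetric]) simp
  also have "\<dots> = (g (b div 2) + g (b div 2 + 2^k)) / 2"
    unfolding mod_two_power_preimage[OF c] by (simp add: add_divide_distrib)
  finally show ?thesis .
qed

lemma sum_de_bruijn_fun_col:
  assumes "a < 2^Suc k"
  shows "(\<Sum>b<2^Suc k. de_bruijn_fun (Suc k) b a * g b)
       = (g (2 * (a mod 2^k)) + g (2 * (a mod 2^k) + 1)) / 2"
proof -
  let ?c = "a mod 2^k"
  have "?c < 2^k" by simp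
  then have "2 * ?c + 1 < 2^Suc k" by (simp only: power_Suc)
  then have preimage: "{b \<in> {..<2^Suc k}. b div 2 = ?c} = {2 * ?c, 2 * ?c + 1}" by auto
  have "(\<Sum>b<2^Suc k. de_bruijn_fun (Suc k) b a * g b)
      = (\<Sum>b<2^Suc k. if b div 2 = ?c then g b / 2 else 0)"
    by (rule sum.cong) (auto simp: de_bruijn_fun_def)
  also have "\<dots> = (\<Sum>b\<in>{b \<in> {..<2^Suc k}. b div 2 = ?c}. g b / 2)"
    by (rule sum.inter_filter[symmetric]) simp
  also have "\<dots> = (g (2 * ?c) + g (2 * ?c + 1)) / 2"
    unfolding preimage by (simp add: add_divide_distrib)
  finally show ?thesis .
qed

lemma de_bruijn_fun_row_sum: "k \<ge> 1 \<Longrightarrow> b < 2^k \<Longrightarrow> (\<Sum>a<2^k. de_bruijn_fun k b a) = 1"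
  using sum_de_bruijn_fun_row[of b "k - 1" "\<lambda>_. 1"] by simp

lemma de_bruijn_fun_col_sum: "k \<ge> 1 \<Longrightarrow> a < 2^k \<Longrightarrow> (\<Sum>b<2^k. de_bruijn_fun k b a) = 1"
  using sum_de_bruijn_fun_col[of a "k - 1" "\<lambda>_. 1"] by simp

lemma de_bruijn_doubly_stochastic:
  assumes "k \<ge> 1"
  shows "doubly_stochastic (2^k) (de_bruijn k)"
  unfolding doubly_stochastic_def
proof (intro conjI allI impI)
  fix i j :: nat assume "i < 2^k" "j < 2^k"
  then show "0 \<le> de_bruijn k $$ (i, j)"
    using de_bruijn_index[OF assms] de_bruijn_fun_nonneg by simp
next
  fix i :: nat assume "i < 2^k"
  then show "(\<Sum>j<2^k. de_bruijn k $$ (i, j)) = 1"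
    using de_bruijn_index[OF assms] de_bruijn_fun_row_sum[OF assms] by simp
next
  fix j :: nat assume "j < 2^k"
  then show "(\<Sum>i<2^k. de_bruijn k $$ (i, j)) = 1"
    using de_bruijn_index[OF assms] de_bruijn_fun_col_sum[OF assms] by simp
qed (rule de_bruijn_carrier)

section \<open>Lower bound on the edge expansion\<close>

definition cut_weight :: "nat \<Rightarrow> (nat \<Rightarrow> nat \<Rightarrow> real) \<Rightarrow> nat set \<Rightarrow> real" where
  "cut_weight n M S = (\<Sum>i\<in>S. \<Sum>j\<in>{..<n} - S. M i j)"

lemma cut_weight_cong:
  assumes "S \<subseteq> {..<n}" "\<And>i j. i < n \<Longrightarrow> j < n \<Longrightarrow> M i j = N i j"
  shows "cut_weight n M S = cut_weight n N S"
  unfolding cut_weight_def using assms by (intro sum.cong) auto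

(* A two-step path from S to its complement leaves S in its first or in its second step. *)
lemma cut_weight_mult_le:
  fixes M N :: "nat \<Rightarrow> nat \<Rightarrow> real"
  assumes S: "S \<subseteq> {..<n}"
    and M_nonneg: "\<And>i l. M i l \<ge> 0" and N_nonneg: "\<And>l j. N l j \<ge> 0"
    and M_col: "\<And>l. l < n \<Longrightarrow> (\<Sum>i<n. M i l) \<le> 1"
    and N_row: "\<And>l. l < n \<Longrightarrow> (\<Sum>j<n. N l j) \<le> 1"
  shows "cut_weight n (\<lambda>i j. \<Sum>l<n. M i l * N l j) S \<le> cut_weight n M S + cut_weight n N S"
proof -
  let ?I = "{..<n}"
  let ?into = "\<lambda>l. \<Sum>i\<in>S. M i l" and ?out = "\<lambda>l. \<Sum>j\<in>?I - S. N l j"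
  have "cut_weight n (\<lambda>i j. \<Sum>l<n. M i l * N l j) S = (\<Sum>l<n. \<Sum>i\<in>S. \<Sum>j\<in>?I - S. M i l * N l j)"
    unfolding cut_weight_def
    by (subst sum.swap) (rule sum.cong[OF refl], rule sum.swap)
  also have "\<dots> = (\<Sum>l<n. ?into l * ?out l)" by (simp add: sum_product)
  also have "\<dots> \<le> (\<Sum>l<n. if l \<in> S then ?out l else ?into l)"
  proof (rule sum_mono)
    fix l assume l: "l \<in> ?I"
    have "?into l \<le> 1"
      using sum_mono2[of ?I S "\<lambda>i. M i l"] S M_nonneg M_col[of l] l by auto
    moreover have "?out l \<le> 1"
      using sum_mono2[of ?I "?I - S" "\<lambda>j. N l j"] N_nonneg N_row[of l] l by auto
    moreover have "0 \<le> ?into l" "0 \<le> ?out l"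
      by (simp_all add: sum_nonneg M_nonneg N_nonneg)
    ultimately show "?into l * ?out l \<le> (if l \<in> S then ?out l else ?into l)"
      by (auto intro: mult_left_le_one_le mult_right_le_one_le)
  qed
  also have "\<dots> = (\<Sum>l\<in>S. ?out l) + (\<Sum>l\<in>?I - S. ?into l)"
    using Int_absorb2[OF S] sum.If_cases[of ?I "\<lambda>l. l \<in> S" ?out ?into]
    by (simp add: Diff_eq Int_commute)
  also have "\<dots> = cut_weight n N S + cut_weight n M S"
    unfolding cut_weight_def by (subst sum.swap[of _ "?I - S"]) simp
  finally show ?thesis by simp
qed

primrec kernel_pow :: "nat \<Rightarrow> (nat \<Rightarrow> nat \<Rightarrow> real) \<Rightarrow> nat \<Rightarrow> nat \<Rightarrow> nat \<Rightarrow> real" where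
  "kernel_pow n M 0 i j = (if i = j then 1 else 0)"
| "kernel_pow n M (Suc m) i j = (\<Sum>l<n. M i l * kernel_pow n M m l j)"

lemma kernel_pow_nonneg: "(\<And>i j. M i j \<ge> 0) \<Longrightarrow> kernel_pow n M m i j \<ge> 0"
  by (induct m arbitrary: i) (auto intro!: sum_nonneg)

lemma kernel_pow_row_sum:
  assumes "\<And>i. i < n \<Longrightarrow> (\<Sum>j<n. M i j) = 1" "i < n"
  shows "(\<Sum>j<n. kernel_pow n M m i j) = 1"
  using assms(2)
proof (induct m arbitrary: i)
  case (Suc m)
  have "(\<Sum>j<n. kernel_pow n M (Suc m) i j) = (\<Sum>l<n. \<Sum>j<n. M i l * kernel_pow n M m l j)"
    unfolding kernel_pow.simps by (rule sum.swap)
  also have "\<dots> = (\<Sum>l<n. M i l * (\<Sum>j<n. kernel_pow n M m l j))"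
    by (simp add: sum_distrib_left)
  also have "\<dots> = 1" using Suc assms(1) by simp
  finally show ?case .
qed simp

lemma cut_weight_kernel_pow_le:
  assumes S: "S \<subseteq> {..<n}" and nonneg: "\<And>i j. M i j \<ge> 0"
    and row: "\<And>i. i < n \<Longrightarrow> (\<Sum>j<n. M i j) = 1"
    and col: "\<And>j. j < n \<Longrightarrow> (\<Sum>i<n. M i j) \<le> 1"
  shows "cut_weight n (kernel_pow n M m) S \<le> real m * cut_weight n M S"
proof (induct m)
  case 0
  show ?case unfolding cut_weight_def by (auto intro!: sum.neutral)
next
  case (Suc m)
  have step: "kernel_pow n M (Suc m) = (\<lambda>i j. \<Sum>l<n. M i l * kernel_pow n M m l j)"
    by (intro ext) simp
  have "cut_weight n (kernel_pow n M (Suc m)) S \<le> cut_weight n M S + cut_weight n (kernel_pow n M m) S"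
    unfolding step
    using cut_weight_mult_le[OF S nonneg kernel_pow_nonneg[OF nonneg] col]
      kernel_pow_row_sum[OF row] by simp
  then show ?case using Suc by (simp add: algebra_simps del: kernel_pow.simps)
qed

lemma cut_weight_uniform:
  assumes "S \<subseteq> {..<n}"
  shows "cut_weight n (\<lambda>_ _. 1 / n) S = card S * (real n - card S) / n"
proof -
  have "finite S" using assms finite_subset by blast
  then have "card ({..<n} - S) = n - card S" using assms by (simp add: card_Diff_subset)
  moreover have "card S \<le> n" using card_mono[OF _ assms] by simp
  ultimately show ?thesis unfolding cut_weight_def by (simp add: of_nat_diff)
qed

lemma half_card_le_cut_weight_of_mixing:
  assumes S: "S \<subseteq> {..<n}" "real (card S) \<le> n / 2" and nonneg: "\<And>i j. M i j \<ge> 0"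
    and row: "\<And>i. i < n \<Longrightarrow> (\<Sum>j<n. M i j) = 1"
    and col: "\<And>j. j < n \<Longrightarrow> (\<Sum>i<n. M i j) \<le> 1"
    and mixing: "\<And>i j. i < n \<Longrightarrow> j < n \<Longrightarrow> kernel_pow n M m i j = 1 / n"
  shows "card S / 2 \<le> real m * cut_weight n M S"
proof (cases "n = 0")
  case False
  have "real n / 2 \<le> real n - card S" using S(2) by simp
  then have "card S * (real n / 2) \<le> card S * (real n - card S)" by (rule mult_left_mono) simp
  then have "card S / 2 \<le> card S * (real n - card S) / n" using False by (simp add: field_simps)
  also have "\<dots> = cut_weight n (kernel_pow n M m) S"
    using cut_weight_uniform[OF S(1)] cut_weight_cong[OF S(1) mixing] by simp
  also have "\<dots> \<le> real m * cut_weight n M S"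
    by (rule cut_weight_kernel_pow_le[OF S(1) nonneg row col])
  finally show ?thesis .
qed (use S in \<open>simp add: cut_weight_def\<close>)

lemma if_eq_add_if_eq_mod:
  fixes x y X :: nat
  assumes "x < 2 * X" "y < X"
  shows "(if y = x then c else 0) + (if y + X = x then c else 0) = (if y = x mod X then c else (0::real))"
proof (cases "x < X")
  case False
  then have "x mod X = x - X" using assms(1) by (simp add: le_mod_geq)
  then show ?thesis using False assms(2) by auto
qed simp

lemma kernel_pow_de_bruijn:
  assumes m: "m \<le> Suc k" and b: "b < 2^Suc k" and a: "a < 2^Suc k"
  shows "kernel_pow (2^Suc k) (de_bruijn_fun (Suc k)) m b a
       = (if b div 2^m = a mod 2^(Suc k - m) then 1 / 2^m else 0)"
  using m b
proof (induct m arbitrary: b)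
  case (Suc m)
  define p where "p = k - m"
  have kp: "k = m + p" using Suc(2) unfolding p_def by simp
  let ?P = "kernel_pow (2^Suc k) (de_bruijn_fun (Suc k))"
  define x where "x = a mod 2^(Suc k - m)"
  define y where "y = b div 2^Suc m"
  have low: "b div 2 div 2^m = y"
    unfolding y_def by (simp add: div_mult2_eq)
  have high: "(b div 2 + 2^k) div 2^m = y + 2^p"
    using low unfolding kp by (simp add: power_add)
  have "(2::nat)^Suc k = 2^p * 2^Suc m" unfolding kp by (simp add: power_add mult_ac)
  then have y_less: "y < 2^p"
    using Suc(3) unfolding y_def by (simp add: less_mult_imp_div_less)
  have x_less: "x < 2 * 2^p" unfolding x_def kp by (simp add: Suc_diff_le)
  have x_mod: "a mod 2^(k - m) = x mod 2^p"
    unfolding x_def kp by (simp add: Suc_diff_le mod_mod_cancel)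
  have b_half: "b div 2 < 2^Suc k" "b div 2 + 2^k < 2^Suc k"
    using Suc(3) by (simp_all add: less_mult_imp_div_less)
  have "?P (Suc m) b a = (?P m (b div 2) a + ?P m (b div 2 + 2^k) a) / 2"
    using sum_de_bruijn_fun_row[OF Suc(3), of "\<lambda>l. ?P m l a"] by simp
  also have "\<dots> = ((if y = x then 1 / 2^m else 0) + (if y + 2^p = x then 1 / 2^m else 0)) / 2"
    using Suc(1)[OF _ b_half(1)] Suc(1)[OF _ b_half(2)] Suc(2)
    unfolding low high x_def by simp
  also have "\<dots> = (if b div 2^Suc m = a mod 2^(Suc k - Suc m) then 1 / 2^Suc m else 0)"
    unfolding if_eq_add_if_eq_mod[OF x_less y_less] by (simp add: x_mod y_def)
  finally show ?case .
qed (use a in simp)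

lemma kernel_pow_de_bruijn_uniform:
  assumes "k \<ge> 1" "b < 2^k" "a < 2^k"
  shows "kernel_pow (2^k) (de_bruijn_fun k) k b a = 1 / 2^k"
proof -
  obtain k' where "k = Suc k'" using assms(1) by (cases k) auto
  then show ?thesis using kernel_pow_de_bruijn[of k k' b a] assms by simp
qed

lemma de_bruijn_cut_weight_ge:
  assumes k: "k \<ge> 1" and S: "S \<subseteq> {..<2^k}" "real (card S) \<le> 2^k / 2"
  shows "card S / 2 \<le> real k * cut_weight (2^k) (de_bruijn_fun k) S"
  using S
  by (intro half_card_le_cut_weight_of_mixing)
    (auto simp: de_bruijn_fun_nonneg de_bruijn_fun_row_sum[OF k] de_bruijn_fun_col_sum[OF k]
      kernel_pow_de_bruijn_uniform[OF k])

definition admissible_cuts :: "nat \<Rightarrow> nat set set" where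
  "admissible_cuts n = {S. S \<subseteq> {..<n} \<and> 1 \<le> card S \<and> real (card S) \<le> n / 2}"

lemma edge_expansion_eq_Min:
  assumes "M \<in> carrier_mat n n"
  shows "edge_expansion M
       = Min ((\<lambda>S. cut_weight n (\<lambda>i j. M $$ (i, j)) S / card S) ` admissible_cuts n)"
proof -
  have "dim_row M = n" using assms by simp
  then show ?thesis
    unfolding edge_expansion_def admissible_cuts_def cut_weight_def Let_def atLeast0LessThan
    by (intro arg_cong[where f = Min]) auto
qed

lemma finite_admissible_cuts: "finite (admissible_cuts n)"
  by (rule finite_subset[of _ "Pow {..<n}"]) (auto simp: admissible_cuts_def)

lemma edge_expansion_le_cut:
  assumes "M \<in> carrier_mat n n" "S \<in> admissible_cuts n"
  shows "edge_expansion M \<le> cut_weight n (\<lambda>i j. M $$ (i, j)) S / card S"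
  unfolding edge_expansion_eq_Min[OF assms(1)]
  using finite_admissible_cuts assms(2) by (intro Min_le) auto

lemma edge_expansion_ge:
  assumes "M \<in> carrier_mat n n" "n \<ge> 2"
    and "\<And>S. S \<in> admissible_cuts n \<Longrightarrow> x \<le> cut_weight n (\<lambda>i j. M $$ (i, j)) S / card S"
  shows "x \<le> edge_expansion M"
proof -
  have "{0} \<in> admissible_cuts n" using assms(2) by (auto simp: admissible_cuts_def)
  then show ?thesis
    unfolding edge_expansion_eq_Min[OF assms(1)]
    using finite_admissible_cuts assms(3) by (subst Min_ge_iff) auto
qed

lemma cut_weight_de_bruijn:
  assumes "k \<ge> 1" "S \<subseteq> {..<2^k}"
  shows "cut_weight (2^k) (\<lambda>i j. de_bruijn k $$ (i, j)) S = cut_weight (2^k) (de_bruijn_fun k) S"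
  using assms by (intro cut_weight_cong) (auto simp: de_bruijn_index)

lemma edge_expansion_de_bruijn_ge:
  assumes k: "k \<ge> 1"
  shows "1 / (2 * real k) \<le> edge_expansion (de_bruijn k)"
proof (rule edge_expansion_ge[OF de_bruijn_carrier])
  show "2 \<le> (2::nat)^k" using k by (simp add: self_le_power)
  fix S assume "S \<in> admissible_cuts (2^k)"
  then have S: "S \<subseteq> {..<2^k}" "1 \<le> card S" "real (card S) \<le> 2^k / 2"
    unfolding admissible_cuts_def by auto
  then show "1 / (2 * real k) \<le> cut_weight (2^k) (\<lambda>i j. de_bruijn k $$ (i, j)) S / card S"
    using de_bruijn_cut_weight_ge[OF k S(1,3)] k
    unfolding cut_weight_de_bruijn[OF k S(1)] by (simp add: field_simps)
qed

section \<open>Upper bound on the edge expansion\<close>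

definition window :: "nat \<Rightarrow> nat \<Rightarrow> nat \<Rightarrow> nat" where
  "window m q a = a div 2^q mod 2^m"

lemma mod_div_mod_two_power:
  assumes "r + m \<le> p"
  shows "(a::nat) mod 2^p div 2^r mod 2^m = a div 2^r mod 2^m"
proof -
  have "take_bit m (drop_bit r (take_bit p a)) = take_bit m (drop_bit r a)"
    using assms by (simp add: drop_bit_take_bit take_bit_take_bit min_def)
  then show ?thesis by (simp add: take_bit_eq_mod drop_bit_eq_div)
qed

lemma window_shift:
  assumes "b div 2 = a mod 2^(k-1)" "1 \<le> q" "q + m \<le> k"
  shows "window m q b = window m (q - 1) a"
proof -
  have "b div 2^q = b div 2 div 2^(q-1)"
    using assms(2) by (metis One_nat_def Suc_pred div_mult2_eq less_eq_Suc_le power_Suc)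
  then have "window m q b = a mod 2^(k-1) div 2^(q-1) mod 2^m"
    unfolding window_def assms(1) by simp
  also have "\<dots> = window m (q - 1) a"
    unfolding window_def by (rule mod_div_mod_two_power) (use assms in auto)
  finally show ?thesis .
qed

definition rotate_bits :: "nat \<Rightarrow> nat \<Rightarrow> nat" where
  "rotate_bits k a = 2 * (a mod 2^(k-1)) + a div 2^(k-1)"

lemma rotate_bits_less: "k \<ge> 1 \<Longrightarrow> a < 2^k \<Longrightarrow> rotate_bits k a < 2^k"
  and rotate_bits_div_two: "k \<ge> 1 \<Longrightarrow> a < 2^k \<Longrightarrow> rotate_bits k a div 2 = a mod 2^(k-1)"
  and rotate_bits_mod_two: "k \<ge> 1 \<Longrightarrow> a < 2^k \<Longrightarrow> rotate_bits k a mod 2 = a div 2^(k-1)"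
proof -
  assume k: "k \<ge> 1" and a: "a < 2^k"
  have "(2::nat)^k = 2 * 2^(k-1)" using k by (cases k) auto
  then have "a div 2^(k-1) < 2" using a by (simp add: less_mult_imp_div_less mult.commute)
  moreover have "a mod 2^(k-1) < 2^(k-1)" by simp
  ultimately show "rotate_bits k a div 2 = a mod 2^(k-1)" "rotate_bits k a mod 2 = a div 2^(k-1)"
    unfolding rotate_bits_def by auto
  show "rotate_bits k a < 2^k"
    unfolding rotate_bits_def \<open>2^k = 2 * 2^(k-1)\<close>
    using \<open>a div 2^(k-1) < 2\<close> \<open>a mod 2^(k-1) < 2^(k-1)\<close> by linarith
qed

lemma inj_on_rotate_bits: "k \<ge> 1 \<Longrightarrow> inj_on (rotate_bits k) {..<2^k}"
  by (intro inj_onI) (metis div_mult_mod_eq lessThan_iff rotate_bits_div_two rotate_bits_mod_two)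

text \<open>The string \<open>a\<close> carries a marker at position \<open>q\<close> if its \<open>m\<close> bits from bit \<open>q\<close> on
  form the number 1.  A de Bruijn step moves every marker up by one position, so each edge of
  the cut of \<open>marker_set\<close> (a marker at one of the \<open>c\<close> top positions) ends in \<open>top_marker c\<close>,
  while rotating the bits injects \<open>top_marker (d + 1)\<close> into \<open>top_marker d\<close>.  Hence
  \<open>|marker_set| \<ge> c |top_marker c| \<ge> c cut\<close>.\<close>

locale marker_cut =
  fixes k m c :: nat
  assumes m_pos: "m \<ge> 1" and c_pos: "c \<ge> 1" and c_le: "c \<le> k - m" and c_le_power: "c \<le> 2^(m-1)"
begin

definition marked :: "nat \<Rightarrow> nat \<Rightarrow> bool" where
  "marked q a \<longleftrightarrow> window m q a = 1"

definition marker_set :: "nat set" where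
  "marker_set = {a. a < 2^k \<and> (\<exists>q. k - m - c < q \<and> q \<le> k - m \<and> marked q a)}"

definition top_marker :: "nat \<Rightarrow> nat set" where
  "top_marker d = {a. a < 2^k \<and> marked (k - m - d) a
     \<and> (\<forall>q. k - m - d < q \<and> q \<le> k - m \<longrightarrow> \<not> marked q a)}"

lemma k_pos: "k \<ge> 1"
  using c_pos c_le by linarith

lemma marked_shift:
  assumes "b div 2 = a mod 2^(k-1)" "1 \<le> q" "q \<le> k - m"
  shows "marked q b \<longleftrightarrow> marked (q - 1) a"
  unfolding marked_def using window_shift[OF assms(1,2)] assms(3) c_le c_pos by simp

lemma marker_set_subset: "marker_set \<subseteq> {..<2^k}"
  unfolding marker_set_def by auto

lemma top_marker_subset: "top_marker d \<subseteq> {..<2^k}"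
  unfolding top_marker_def by auto

lemma finite_top_marker: "finite (top_marker d)"
  using top_marker_subset finite_subset by blast

lemma cut_edge_into_top_marker:
  assumes i: "i \<in> marker_set" and j: "j < 2^k" "j \<notin> marker_set"
    and edge: "de_bruijn_fun k i j \<noteq> 0"
  shows "j \<in> top_marker c"
proof -
  obtain q where q: "k - m - c < q" "q \<le> k - m" "marked q i"
    using i unfolding marker_set_def by auto
  have "i div 2 = j mod 2^(k-1)" using edge unfolding de_bruijn_fun_def by (auto split: if_splits)
  moreover have "1 \<le> q" using q(1) by simp
  ultimately have j_marked: "marked (q - 1) j" using marked_shift q(2,3) by blast
  have j_unmarked: "\<not> marked q' j" if "k - m - c < q'" "q' \<le> k - m" for q'
    using j that unfolding marker_set_def by auto
  have "q - 1 = k - m - c"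
  proof (rule ccontr)
    assume "q - 1 \<noteq> k - m - c"
    then have "k - m - c < q - 1" "q - 1 \<le> k - m" using q by auto
    then show False using j_unmarked j_marked by blast
  qed
  then show ?thesis using j_marked j_unmarked j unfolding top_marker_def by auto
qed

lemma cut_weight_marker_set_le: "cut_weight (2^k) (de_bruijn_fun k) marker_set \<le> card (top_marker c)"
proof -
  have "cut_weight (2^k) (de_bruijn_fun k) marker_set
      = (\<Sum>i\<in>marker_set. \<Sum>j\<in>top_marker c. de_bruijn_fun k i j)"
    unfolding cut_weight_def
  proof (rule sum.cong[OF refl], rule sum.mono_neutral_right)
    show "top_marker c \<subseteq> {..<2^k} - marker_set"
      using top_marker_subset unfolding top_marker_def marker_set_def by auto
    show "\<forall>j\<in>{..<2^k} - marker_set - top_marker c. de_bruijn_fun k i j = 0"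
      if "i \<in> marker_set" for i
      using cut_edge_into_top_marker[OF that] by auto
  qed auto
  also have "\<dots> = (\<Sum>j\<in>top_marker c. \<Sum>i\<in>marker_set. de_bruijn_fun k i j)"
    by (rule sum.swap)
  also have "\<dots> \<le> (\<Sum>j\<in>top_marker c. \<Sum>i<2^k. de_bruijn_fun k i j)"
    by (intro sum_mono sum_mono2) (use marker_set_subset de_bruijn_fun_nonneg in auto)
  also have "\<dots> = (\<Sum>j\<in>top_marker c. 1)"
    by (rule sum.cong[OF refl]) (use top_marker_subset de_bruijn_fun_col_sum[OF k_pos] in auto)
  also have "\<dots> = card (top_marker c)" by simp
  finally show ?thesis .
qed

lemma top_marker_disjoint: "d < d' \<Longrightarrow> d' \<le> k - m \<Longrightarrow> top_marker d \<inter> top_marker d' = {}"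
  unfolding top_marker_def by (auto dest!: spec[of _ "k - m - d"])

lemma marker_set_eq_Union: "marker_set = (\<Union>d<c. top_marker d)"
proof
  show "(\<Union>d<c. top_marker d) \<subseteq> marker_set"
    unfolding top_marker_def marker_set_def using c_le by fastforce
  show "marker_set \<subseteq> (\<Union>d<c. top_marker d)"
  proof
    fix a assume a: "a \<in> marker_set"
    define Q where "Q = {q. k - m - c < q \<and> q \<le> k - m \<and> marked q a}"
    have "finite Q" "Q \<noteq> {}" using a unfolding Q_def marker_set_def by auto
    define q\<^sub>0 where "q\<^sub>0 = Max Q"
    have top: "q\<^sub>0 \<in> Q" and above: "\<And>q. q \<in> Q \<Longrightarrow> q \<le> q\<^sub>0"
      using \<open>finite Q\<close> \<open>Q \<noteq> {}\<close> unfolding q\<^sub>0_def by auto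
    then have "k - m - c < q\<^sub>0" "q\<^sub>0 \<le> k - m" unfolding Q_def by auto
    define d where "d = k - m - q\<^sub>0"
    have d: "q\<^sub>0 = k - m - d" "d < c"
      using \<open>k - m - c < q\<^sub>0\<close> \<open>q\<^sub>0 \<le> k - m\<close> c_le unfolding d_def by arith+
    have "a \<in> top_marker d"
      unfolding top_marker_def
    proof (intro CollectI conjI allI impI)
      show "a < 2^k" using a unfolding marker_set_def by auto
      show "marked (k - m - d) a" using top d(1) unfolding Q_def by auto
      fix q assume q: "k - m - d < q \<and> q \<le> k - m"
      show "\<not> marked q a"
      proof
        assume "marked q a"
        then have "q \<in> Q" using q d unfolding Q_def by auto
        then show False using above q d(1) by fastforce
      qed
    qed
    then show "a \<in> (\<Union>d<c. top_marker d)" using d(2) by auto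
  qed
qed

lemma card_marker_set: "card marker_set = (\<Sum>d<c. card (top_marker d))"
  unfolding marker_set_eq_Union
proof (rule card_UN_disjoint)
  show "\<forall>d\<in>{..<c}. \<forall>d'\<in>{..<c}. d \<noteq> d' \<longrightarrow> top_marker d \<inter> top_marker d' = {}"
    using top_marker_disjoint c_le by (metis Int_commute lessThan_iff linorder_neqE_nat le_trans less_imp_le)
qed (auto simp: finite_top_marker)

lemma card_top_marker_Suc_le:
  assumes "Suc d \<le> k - m"
  shows "card (top_marker (Suc d)) \<le> card (top_marker d)"
proof (rule card_inj_on_le)
  show "inj_on (rotate_bits k) (top_marker (Suc d))"
    using inj_on_rotate_bits[OF k_pos] top_marker_subset by (rule inj_on_subset)
  show "rotate_bits k ` top_marker (Suc d) \<subseteq> top_marker d"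
  proof
    fix b assume "b \<in> rotate_bits k ` top_marker (Suc d)"
    then obtain a where a: "a \<in> top_marker (Suc d)" and b: "b = rotate_bits k a" by auto
    have "a < 2^k" using a unfolding top_marker_def by auto
    then have shift: "marked q b \<longleftrightarrow> marked (q - 1) a" if "1 \<le> q" "q \<le> k - m" for q
      unfolding b using marked_shift[OF rotate_bits_div_two[OF k_pos]] that by blast
    have "k - m - d - 1 = k - m - Suc d" "1 \<le> k - m - d" using assms by auto
    then have "marked (k - m - d) b" using shift[of "k - m - d"] a unfolding top_marker_def by auto
    moreover have "\<not> marked q b" if "k - m - d < q" "q \<le> k - m" for q
    proof -
      have "k - m - Suc d < q - 1" "q - 1 \<le> k - m" "1 \<le> q" using that assms by auto
      then have "\<not> marked (q - 1) a" using a unfolding top_marker_def by blast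
      then show ?thesis using shift[of q] \<open>1 \<le> q\<close> that(2) by blast
    qed
    ultimately show "b \<in> top_marker d"
      using rotate_bits_less[OF k_pos \<open>a < 2^k\<close>] unfolding b top_marker_def by auto
  qed
qed (rule finite_top_marker)

lemma card_top_marker_antimono:
  assumes "d \<le> d'" "d' \<le> k - m"
  shows "card (top_marker d') \<le> card (top_marker d)"
  using assms
proof (induct d' rule: dec_induct)
  case (step d')
  then show ?case using card_top_marker_Suc_le[of d'] by simp
qed simp

lemma top_marker_0: "top_marker 0 = {2^(k-m)..<2^(k-m+1)}"
proof -
  have top_iff: "a \<in> top_marker 0 \<longleftrightarrow> a div 2^(k-m) = 1" if "a < 2^k" for a
  proof -
    have "(2::nat)^k = 2^m * 2^(k-m)" using c_le c_pos by (simp flip: power_add)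
    then have "a div 2^(k-m) < 2^m" using that by (simp add: less_mult_imp_div_less)
    then show ?thesis using that unfolding top_marker_def marked_def window_def by auto
  qed
  have ivl_iff: "a div 2^(k-m) = 1 \<longleftrightarrow> a \<in> {2^(k-m)..<2^(k-m+1)}" for a :: nat
  proof -
    have "a div 2^(k-m) = 1 \<longleftrightarrow> 1 \<le> a div 2^(k-m) \<and> a div 2^(k-m) < 2" by linarith
    then show ?thesis by (simp add: less_eq_div_iff_mult_less_eq div_less_iff_less_mult)
  qed
  have "(2::nat)^(k-m+1) \<le> 2^k" using c_le c_pos m_pos by (intro power_increasing) auto
  show ?thesis
  proof (rule equalityI; rule subsetI)
    fix a assume a: "a \<in> top_marker 0"
    then have "a < 2^k" using top_marker_subset by auto
    then have "a div 2^(k-m) = 1" using a top_iff by blast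
    then show "a \<in> {2^(k-m)..<2^(k-m+1)}" by (rule iffD1[OF ivl_iff])
  next
    fix a :: nat assume a: "a \<in> {2^(k-m)..<2^(k-m+1)}"
    then have "a < 2^k" using \<open>2^(k-m+1) \<le> 2^k\<close> by auto
    moreover have "a div 2^(k-m) = 1" using a by (rule iffD2[OF ivl_iff])
    ultimately show "a \<in> top_marker 0" using top_iff by blast
  qed
qed

lemma card_marker_set_bounds:
  "c * card (top_marker c) \<le> card marker_set" "card marker_set \<le> c * 2^(k-m)" "1 \<le> card marker_set"
proof -
  have "(\<Sum>d<c. card (top_marker c)) \<le> card marker_set"
    unfolding card_marker_set by (rule sum_mono) (use card_top_marker_antimono c_le in auto)
  then show "c * card (top_marker c) \<le> card marker_set" by simp
  have "card marker_set \<le> (\<Sum>d<c. card (top_marker 0))"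
    unfolding card_marker_set by (rule sum_mono) (use card_top_marker_antimono c_le in auto)
  then show "card marker_set \<le> c * 2^(k-m)" unfolding top_marker_0 by simp
  have "card (top_marker 0) \<le> card marker_set"
    unfolding card_marker_set using c_pos by (intro member_le_sum) auto
  moreover have "1 \<le> card (top_marker 0)" unfolding top_marker_0 by (simp add: Suc_le_eq)
  ultimately show "1 \<le> card marker_set" by linarith
qed

lemma marker_set_admissible: "marker_set \<in> admissible_cuts (2^k)"
proof -
  have "c * 2^(k-m) \<le> 2^(m-1) * 2^(k-m)" using c_le_power by simp
  also have "\<dots> = (2::nat)^(k-1)" using c_le c_pos m_pos by (simp flip: power_add)
  finally have "card marker_set \<le> 2^(k-1)"
    using card_marker_set_bounds(2) by (rule le_trans[rotated])
  then have "real (card marker_set) \<le> 2^(k-1)" by simp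
  also have "(2::real)^(k-1) = 2^k / 2" using k_pos by (cases k) auto
  finally show ?thesis
    unfolding admissible_cuts_def using marker_set_subset card_marker_set_bounds(3) by auto
qed

lemma cut_ratio_marker_set_le: "cut_weight (2^k) (de_bruijn_fun k) marker_set / card marker_set \<le> 1 / c"
proof -
  have pos: "real (card marker_set) > 0" using card_marker_set_bounds(3) by simp
  have "real c * cut_weight (2^k) (de_bruijn_fun k) marker_set \<le> real c * card (top_marker c)"
    using cut_weight_marker_set_le by (rule mult_left_mono) simp
  also have "\<dots> \<le> card marker_set"
    using card_marker_set_bounds(1) by (metis of_nat_le_iff of_nat_mult)
  finally show ?thesis
    using pos c_pos by (simp add: field_simps)
qed

end

lemma edge_expansion_de_bruijn_le:
  assumes k: "k \<ge> 1"
  shows "edge_expansion (de_bruijn k) \<le> 8 / real k"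
proof (cases "k \<ge> 4")
  case True
  define q where "q = k div 8"
  define r where "r = k mod 8"
  define c where "c = q + 1"
  have "k = 8 * q + r" "r < 8" unfolding q_def r_def by simp_all
  then have "2 * c + 1 \<le> k" "k \<le> 8 * c" using True c_def by linarith+
  then have c_bounds: "2 * c + 1 \<le> k" "real k \<le> 8 * real c" by linarith+
  have "c < 2^c" by (rule less_exp)
  moreover have "c \<le> k - (c + 1)" using c_bounds(1) by arith
  moreover have "1 \<le> c" unfolding c_def by simp
  ultimately interpret marker_cut k "c + 1" c by unfold_locales auto
  have "edge_expansion (de_bruijn k) \<le> cut_weight (2^k) (de_bruijn_fun k) marker_set / card marker_set"
    using edge_expansion_le_cut[OF de_bruijn_carrier marker_set_admissible]
      cut_weight_de_bruijn[OF k marker_set_subset] by simp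
  also have "\<dots> \<le> 1 / c" by (rule cut_ratio_marker_set_le)
  also have "\<dots> \<le> 8 / k" using c_bounds(2) True c_pos by (simp add: field_simps)
  finally show ?thesis .
next
  case False
  have single: "{0} \<in> admissible_cuts (2^k)"
    using k by (auto simp: admissible_cuts_def self_le_power)
  have "cut_weight (2^k) (de_bruijn_fun k) {0} \<le> (\<Sum>j<2^k. de_bruijn_fun k 0 j)"
    unfolding cut_weight_def by (auto intro: sum_mono2 simp: de_bruijn_fun_nonneg)
  then have "cut_weight (2^k) (de_bruijn_fun k) {0} \<le> 1" using de_bruijn_fun_row_sum[OF k] by simp
  then have "edge_expansion (de_bruijn k) \<le> 1"
    using edge_expansion_le_cut[OF de_bruijn_carrier single] cut_weight_de_bruijn[OF k] single
    unfolding admissible_cuts_def by fastforce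
  also have "\<dots> \<le> 8 / k" using False k by (simp add: field_simps)
  finally show ?thesis .
qed

section \<open>Walsh characters\<close>

definition walsh :: "nat \<Rightarrow> nat \<Rightarrow> nat \<Rightarrow> real" where
  "walsh k t a = (\<Prod>i<k. if bit t i \<and> bit a i then -1 else 1)"

lemma walsh_Suc: "walsh (Suc k) t a = walsh k t a * (if bit t k \<and> bit a k then -1 else 1)"
  unfolding walsh_def by simp

lemma walsh_Suc_lowest_bit:
  "walsh (Suc k) t a = (if odd t \<and> odd a then -1 else 1) * walsh k (t div 2) (a div 2)"
  unfolding walsh_def prod.lessThan_Suc_shift by (simp add: bit_Suc bit_0)

lemma walsh_mod: "walsh k t (a mod 2^k) = walsh k t a"
  unfolding walsh_def
  by (rule prod.cong[OF refl]) (simp add: take_bit_eq_mod[symmetric] bit_take_bit_iff)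

lemma walsh_Suc_lower_half: "a < 2^k \<Longrightarrow> walsh (Suc k) t a = walsh k t a"
  unfolding walsh_Suc by (simp add: bit_iff_odd)

lemma walsh_Suc_upper_half:
  assumes "a < 2^k"
  shows "walsh (Suc k) t (a + 2^k) = walsh k t a * (if bit t k then -1 else 1)"
proof -
  have "bit (a + 2^k) k" using assms by (simp add: bit_iff_odd)
  moreover have "walsh k t (a + 2^k) = walsh k t a"
    using walsh_mod[of k t "a + 2^k"] assms by simp
  ultimately show ?thesis unfolding walsh_Suc by simp
qed

lemma sum_lessThan_double: "(\<Sum>a<2 * N. f a) = (\<Sum>a<N. f a) + (\<Sum>a<N. f (a + (N::nat)))"
proof -
  have "(\<Sum>a<2 * N. f a) = (\<Sum>a\<in>{0..<N}. f a) + (\<Sum>a\<in>{N..<N + N}. f a)"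
    by (simp add: sum.atLeastLessThan_concat mult_2 atLeast0LessThan[symmetric])
  also have "(\<Sum>a\<in>{N..<N + N}. f a) = (\<Sum>a\<in>{0..<N}. f (a + N))"
    using sum.shift_bounds_nat_ivl[of f 0 N N] by simp
  finally show ?thesis by (simp add: atLeast0LessThan)
qed

lemma walsh_orthogonal_bits:
  "(\<Sum>a<2^k. walsh k t a * walsh k t' a) = (if \<forall>i<k. bit t i = bit t' i then 2^k else 0)"
proof (induct k)
  case (Suc k)
  have "(\<Sum>a<2^Suc k. walsh (Suc k) t a * walsh (Suc k) t' a)
      = (\<Sum>a<2^k. walsh (Suc k) t a * walsh (Suc k) t' a)
        + (\<Sum>a<2^k. walsh (Suc k) t (a + 2^k) * walsh (Suc k) t' (a + 2^k))"
    by (simp add: sum_lessThan_double)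
  also have "\<dots> = (\<Sum>a<2^k. walsh k t a * walsh k t' a)
      * (1 + (if bit t k then -1 else 1) * (if bit t' k then -1 else 1))"
    by (simp add: walsh_Suc_lower_half walsh_Suc_upper_half sum.distrib[symmetric]
        sum_distrib_right algebra_simps)
  also have "\<dots> = (if \<forall>i<Suc k. bit t i = bit t' i then 2^Suc k else 0)"
    unfolding Suc by (auto simp: less_Suc_eq)
  finally show ?case .
qed (simp add: walsh_def)

lemma eq_if_low_bits_eq:
  assumes "(t::nat) < 2^k" "t' < 2^k" "\<forall>i<k. bit t i = bit t' i"
  shows "t = t'"
proof -
  have "take_bit k t = take_bit k t'"
    by (rule bit_eqI) (use assms(3) in \<open>auto simp: bit_take_bit_iff\<close>)
  then show ?thesis using assms(1,2) by (simp add: take_bit_nat_eq_self)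
qed

lemma walsh_orthogonal:
  assumes "t < 2^k" "t' < 2^k"
  shows "(\<Sum>a<2^k. walsh k t a * walsh k t' a) = (if t = t' then 2^k else 0)"
  unfolding walsh_orthogonal_bits using eq_if_low_bits_eq[OF assms] by auto

lemma bit_iff_two_power_le:
  assumes "(t::nat) < 2^Suc k"
  shows "bit t k \<longleftrightarrow> 2^k \<le> t"
proof -
  have "t div 2^k < 2" using assms by (simp add: div_less_iff_less_mult)
  then have "bit t k \<longleftrightarrow> t div 2^k \<noteq> 0"
    using less_2_cases[of "t div 2^k"] by (auto simp: bit_iff_odd)
  also have "\<dots> \<longleftrightarrow> 2^k \<le> t" by (auto simp: div_eq_0_iff)
  finally show ?thesis .
qed

lemma de_bruijn_fun_walsh:
  assumes b: "b < 2^Suc k" and t: "t < 2^Suc k"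
  shows "(\<Sum>a<2^Suc k. de_bruijn_fun (Suc k) b a * walsh (Suc k) t a)
       = (if t < 2^k then walsh (Suc k) (2 * t) b else 0)"
proof -
  let ?c = "b div 2"
  have c: "?c < 2^k" using b by (simp add: less_mult_imp_div_less)
  have "(\<Sum>a<2^Suc k. de_bruijn_fun (Suc k) b a * walsh (Suc k) t a)
      = (walsh (Suc k) t ?c + walsh (Suc k) t (?c + 2^k)) / 2"
    by (rule sum_de_bruijn_fun_row[OF b])
  also have "\<dots> = walsh k t ?c * (1 + (if bit t k then -1 else 1)) / 2"
    using walsh_Suc_lower_half[OF c] walsh_Suc_upper_half[OF c] by (simp add: algebra_simps)
  also have "\<dots> = (if t < 2^k then walsh k t ?c else 0)"
    using bit_iff_two_power_le[OF t] by auto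
  also have "\<dots> = (if t < 2^k then walsh (Suc k) (2 * t) b else 0)"
    unfolding walsh_Suc_lowest_bit by simp
  finally show ?thesis .
qed

lemma de_bruijn_fun_transpose_walsh:
  assumes a: "a < 2^Suc k" and t: "t < 2^Suc k"
  shows "(\<Sum>b<2^Suc k. de_bruijn_fun (Suc k) b a * walsh (Suc k) t b)
       = (if even t then walsh (Suc k) (t div 2) a else 0)"
proof -
  let ?c = "a mod 2^k"
  have "(\<Sum>b<2^Suc k. de_bruijn_fun (Suc k) b a * walsh (Suc k) t b)
      = (walsh (Suc k) t (2 * ?c) + walsh (Suc k) t (2 * ?c + 1)) / 2"
    by (rule sum_de_bruijn_fun_col[OF a])
  also have "\<dots> = (if even t then walsh k (t div 2) ?c else 0)"
    unfolding walsh_Suc_lowest_bit by auto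
  also have "\<dots> = (if even t then walsh (Suc k) (t div 2) a else 0)"
  proof -
    have "t div 2 < 2^k" using t by (simp add: less_mult_imp_div_less)
    then have "walsh (Suc k) (t div 2) a = walsh k (t div 2) a"
      unfolding walsh_Suc by (simp add: bit_iff_odd)
    then show ?thesis using walsh_mod[of k "t div 2" a] by simp
  qed
  finally show ?thesis .
qed

section \<open>Jordan chains\<close>

definition jordan_pattern :: "(nat \<times> 'a) list \<Rightarrow> ('a \<times> bool) list" where
  "jordan_pattern n_as = concat (map (\<lambda>(l, a). map (\<lambda>s. (a, s \<noteq> 0)) [0..<l]) n_as)"

lemma jordan_pattern_Cons:
  "jordan_pattern ((l, a) # n_as) = map (\<lambda>s. (a, s \<noteq> 0)) [0..<l] @ jordan_pattern n_as"
  unfolding jordan_pattern_def by simp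

lemma length_jordan_pattern: "length (jordan_pattern n_as) = sum_list (map fst n_as)"
  by (induct n_as) (auto simp: jordan_pattern_def)

lemma jordan_pattern_nth_0: "jordan_pattern n_as \<noteq> [] \<Longrightarrow> \<not> snd (jordan_pattern n_as ! 0)"
proof (induct n_as)
  case (Cons p n_as)
  then show ?case by (cases p; cases "fst p") (auto simp: jordan_pattern_Cons nth_append)
qed (simp add: jordan_pattern_def)

lemma jordan_matrix_index:
  fixes n_as :: "(nat \<times> 'a :: {zero,one}) list"
  assumes "i < sum_list (map fst n_as)" "j < sum_list (map fst n_as)"
  shows "jordan_matrix n_as $$ (i, j) = (if i = j then fst (jordan_pattern n_as ! j)
           else if Suc i = j \<and> snd (jordan_pattern n_as ! j) then 1 else 0)"
  using assms
proof (induct n_as arbitrary: i j)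
  case (Cons p n_as)
  obtain l a where p: "p = (l, a)" by force
  have ij: "i < l + sum_list (map fst n_as)" "j < l + sum_list (map fst n_as)"
    using Cons(2,3) p by auto
  have J: "jordan_matrix ((l, a) # n_as) $$ (i, j) =
     (if i < l then if j < l then jordan_block l a $$ (i, j) else 0
      else if j < l then 0 else jordan_matrix n_as $$ (i - l, j - l))"
    unfolding jordan_matrix_Cons using ij by (subst index_mat_four_block) auto
  have P: "jordan_pattern ((l, a) # n_as) ! j
      = (if j < l then (a, j \<noteq> 0) else jordan_pattern n_as ! (j - l))"
    unfolding jordan_pattern_Cons by (auto simp: nth_append)
  consider "i < l" "j < l" | "i < l" "\<not> j < l" | "\<not> i < l" "j < l" | "\<not> i < l" "\<not> j < l"
    by blast
  then show ?case
  proof cases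
    case 2
    then have "0 < length (jordan_pattern n_as)"
      using ij(2) unfolding length_jordan_pattern by linarith
    then have "jordan_pattern n_as \<noteq> []" by auto
    then have "Suc i = j \<Longrightarrow> \<not> snd (jordan_pattern n_as ! (j - l))"
      using jordan_pattern_nth_0[of n_as] 2 by (simp add: Suc_le_eq)
    then show ?thesis unfolding p J P using 2 by auto
  next
    case 4
    have "jordan_matrix n_as $$ (i - l, j - l) = (if i - l = j - l then fst (jordan_pattern n_as ! (j - l))
         else if Suc (i - l) = j - l \<and> snd (jordan_pattern n_as ! (j - l)) then 1 else 0)"
      by (rule Cons(1)) (use ij 4 in auto)
    moreover have "i - l = j - l \<longleftrightarrow> i = j" "Suc (i - l) = j - l \<longleftrightarrow> Suc i = j"
      using 4 by auto
    ultimately show ?thesis unfolding p J P using 4 by auto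
  qed (auto simp: p J P)
qed simp

text \<open>A pair \<open>(r, w)\<close> with \<open>w\<close> odd stands for the chain of characters \<open>2^(r-1) w, \<dots>, 2 w, w\<close>:
  the de Bruijn matrix maps each of them to its predecessor, and the first one, which is at
  least \<open>2^(k-1)\<close>, to zero.  Together with the constant character these chains cover every
  character exactly once.  In \<open>chain_columns\<close> the flag marks the columns that carry a 1 above
  the diagonal of the Jordan block.\<close>

definition de_bruijn_chains :: "nat \<Rightarrow> (nat \<times> nat) list" where
  "de_bruijn_chains k = (k, 1) #
     concat (map (\<lambda>r. map (\<lambda>i. (r, 2^(k-r) + 2 * i + 1)) [0..<2^(k-r-1)]) [1..<k])"

definition chain_columns :: "nat \<times> nat \<Rightarrow> (nat \<times> bool) list" where
  "chain_columns p = (case p of (r, w) \<Rightarrow> map (\<lambda>s. (w * 2^(r-1-s), s \<noteq> 0)) [0..<r])"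

definition jordan_columns :: "nat \<Rightarrow> (nat \<times> bool) list" where
  "jordan_columns k = (0, False) # concat (map chain_columns (de_bruijn_chains k))"

definition jordan_shape :: "nat \<Rightarrow> (nat \<times> real) list" where
  "jordan_shape k = (1, 1) # map (\<lambda>(r, w). (r, 0)) (de_bruijn_chains k)"

definition chain_compatible :: "nat \<Rightarrow> (nat \<times> bool) list \<Rightarrow> bool" where
  "chain_compatible k xs \<longleftrightarrow> (\<forall>j<length xs. fst (xs ! j) < 2^k
     \<and> (snd (xs ! j) \<longrightarrow> 0 < j \<and> fst (xs ! (j-1)) = 2 * fst (xs ! j) \<and> fst (xs ! j) < 2^(k-1))
     \<and> (\<not> snd (xs ! j) \<longrightarrow> 2^(k-1) \<le> fst (xs ! j)))"

lemma chain_compatible_append: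
  assumes "chain_compatible k xs" "chain_compatible k ys"
  shows "chain_compatible k (xs @ ys)"
  unfolding chain_compatible_def
proof (intro allI impI)
  fix j assume j: "j < length (xs @ ys)"
  show "fst ((xs @ ys) ! j) < 2^k
     \<and> (snd ((xs @ ys) ! j) \<longrightarrow> 0 < j \<and> fst ((xs @ ys) ! (j-1)) = 2 * fst ((xs @ ys) ! j)
          \<and> fst ((xs @ ys) ! j) < 2^(k-1))
     \<and> (\<not> snd ((xs @ ys) ! j) \<longrightarrow> 2^(k-1) \<le> fst ((xs @ ys) ! j))"
  proof (cases "j < length xs")
    case True
    then show ?thesis using assms(1) unfolding chain_compatible_def by (auto simp: nth_append)
  next
    case False
    define j' where "j' = j - length xs"
    have j': "j' < length ys" "j = j' + length xs" using j False unfolding j'_def by auto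
    have "(xs @ ys) ! (j-1) = ys ! (j'-1)" if "0 < j'"
    proof -
      have "j - 1 = (j' - 1) + length xs" "\<not> j - 1 < length xs" using j' that by auto
      then show ?thesis by (simp add: nth_append)
    qed
    moreover have "(xs @ ys) ! j = ys ! j'" using j' by (simp add: nth_append)
    ultimately show ?thesis using assms(2) j' unfolding chain_compatible_def by auto
  qed
qed

lemma chain_compatible_concat:
  "(\<And>xs. xs \<in> set xss \<Longrightarrow> chain_compatible k xs) \<Longrightarrow> chain_compatible k (concat xss)"
  by (induct xss) (auto intro: chain_compatible_append simp: chain_compatible_def[of _ "[]"])

lemma chain_columns_compatible:
  assumes k: "k \<ge> 1" and r: "1 \<le> r" and lo: "2^(k-1) \<le> w * 2^(r-1)" and hi: "w * 2^(r-1) < 2^k"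
  shows "chain_compatible k (chain_columns (r, w))"
  unfolding chain_compatible_def
proof (intro allI impI)
  fix j assume "j < length (chain_columns (r, w))"
  then have jr: "j < r" by (simp add: chain_columns_def)
  have nth: "chain_columns (r, w) ! j = (w * 2^(r-1-j), j \<noteq> 0)"
    using jr by (simp add: chain_columns_def)
  have nth_prev: "chain_columns (r, w) ! (j-1) = (w * 2^(r-1-(j-1)), j - 1 \<noteq> 0)"
    using jr by (auto simp: chain_columns_def simp del: upt_Suc)
  have mono: "w * 2^(r-1-i) \<le> w * 2^(r-1)" for i by (intro mult_le_mono2 power_increasing) auto
  have two_power_k: "(2::nat)^k = 2 * 2^(k-1)" using k by (cases k) auto
  have "w * 2^(r-1-(j-1)) = 2 * (w * 2^(r-1-j)) \<and> w * 2^(r-1-j) < 2^(k-1)" if "j \<noteq> 0"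
  proof -
    have e: "r - 1 - (j - 1) = Suc (r - 1 - j)" using that jr by simp
    have double: "w * 2^(r-1-(j-1)) = 2 * (w * 2^(r-1-j))" unfolding e by simp
    then have "2 * (w * 2^(r-1-j)) < 2 * 2^(k-1)" using mono[of "j-1"] hi two_power_k by linarith
    then show ?thesis using double by simp
  qed
  then show "fst (chain_columns (r, w) ! j) < 2^k
     \<and> (snd (chain_columns (r, w) ! j) \<longrightarrow> 0 < j
          \<and> fst (chain_columns (r, w) ! (j-1)) = 2 * fst (chain_columns (r, w) ! j)
          \<and> fst (chain_columns (r, w) ! j) < 2^(k-1))
     \<and> (\<not> snd (chain_columns (r, w) ! j) \<longrightarrow> 2^(k-1) \<le> fst (chain_columns (r, w) ! j))"
    unfolding nth nth_prev using le_less_trans[OF mono[of j] hi] lo by auto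
qed

lemma de_bruijn_chains_bounds:
  assumes k: "k \<ge> 1" and p: "(r, w) \<in> set (de_bruijn_chains k)"
  shows "1 \<le> r" "r \<le> k" "2^(k-1) \<le> w * 2^(r-1)" "w * 2^(r-1) < 2^k"
proof -
  have h: "1 \<le> r \<and> r \<le> k \<and> 2^(k-r) \<le> w \<and> w < 2 * 2^(k-r)"
  proof (cases "(r, w) = (k, 1)")
    case False
    then obtain i where r: "1 \<le> r" "r < k" and i: "i < 2^(k-r-1)" and w: "w = 2^(k-r) + 2 * i + 1"
      using p unfolding de_bruijn_chains_def by auto
    have "(2::nat)^(k-r) = 2 * 2^(k-r-1)" using r by (cases "k - r") auto
    then show ?thesis using r i w by auto
  qed (use k in auto)
  then show "1 \<le> r" "r \<le> k" by auto
  have e: "(2::nat)^(k-r) * 2^(r-1) = 2^(k-1)" using h by (simp flip: power_add)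
  show "2^(k-1) \<le> w * 2^(r-1)" using e mult_le_mono1[of "2^(k-r)" w "2^(r-1)"] h by linarith
  have "w * 2^(r-1) < 2 * 2^(k-r) * 2^(r-1)" using h by simp
  also have "\<dots> = 2^k" using e k by (cases k) auto
  finally show "w * 2^(r-1) < 2^k" .
qed

lemma chain_compatible_chains:
  assumes k: "k \<ge> 1"
  shows "chain_compatible k (concat (map chain_columns (de_bruijn_chains k)))"
proof (rule chain_compatible_concat)
  fix xs assume "xs \<in> set (map chain_columns (de_bruijn_chains k))"
  then obtain r w where mem: "(r, w) \<in> set (de_bruijn_chains k)" and xs: "xs = chain_columns (r, w)"
    by auto
  show "chain_compatible k xs"
    unfolding xs using chain_columns_compatible[OF k de_bruijn_chains_bounds(1,3,4)[OF k mem]] .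
qed

lemma two_power_eq_chain_lengths:
  "k \<ge> 1 \<Longrightarrow> 1 + k + (\<Sum>r\<in>{1..<k}. 2^(k-r-1) * r) = (2::nat)^k"
proof (induct k rule: nat_induct_at_least)
  case (Suc k)
  have "(\<Sum>r\<in>{1..<Suc k}. 2^(Suc k-r-1) * r) = (\<Sum>r\<in>{1..<k}. 2^(k-r) * r) + k"
    using Suc(1) by (simp add: sum.atLeastLessThan_Suc)
  also have "(\<Sum>r\<in>{1..<k}. 2^(k-r) * r) = 2 * (\<Sum>r\<in>{1..<k}. 2^(k-r-1) * r)"
    unfolding sum_distrib_left
  proof (rule sum.cong[OF refl])
    fix r assume "r \<in> {1..<k}"
    then have "k - r = Suc (k - r - 1)" by (simp add: Suc_diff_Suc)
    then show "2^(k-r) * r = 2 * (2^(k-r-1) * r)" by (metis mult.assoc power_Suc)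
  qed
  finally show ?case using Suc(2) by simp
qed simp

lemma sum_list_concat: "sum_list (concat xss) = sum_list (map sum_list xss)"
  by (induct xss) auto

lemma sum_list_chain_lengths:
  assumes "k \<ge> 1"
  shows "sum_list (map fst (de_bruijn_chains k)) = 2^k - 1"
proof -
  have "sum_list (map fst (de_bruijn_chains k)) = k + sum_list (map (\<lambda>r. 2^(k-r-1) * r) [1..<k])"
    unfolding de_bruijn_chains_def
    by (simp add: map_concat sum_list_concat o_def map_replicate_const sum_list_replicate)
  then show ?thesis
    using two_power_eq_chain_lengths[OF assms] by (simp add: sum_set_upt_conv_sum_list_nat[symmetric])
qed

lemma length_chain_columns: "length (chain_columns p) = fst p"
  unfolding chain_columns_def by (cases p) simp

lemma length_jordan_columns: "k \<ge> 1 \<Longrightarrow> length (jordan_columns k) = 2^k"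
  unfolding jordan_columns_def
  using sum_list_chain_lengths by (simp add: length_concat o_def length_chain_columns)

lemma sum_list_jordan_shape: "k \<ge> 1 \<Longrightarrow> sum_list (map fst (jordan_shape k)) = 2^k"
  unfolding jordan_shape_def using sum_list_chain_lengths by (simp add: o_def case_prod_beta)

lemma mset_jordan_shape:
  assumes "k \<ge> 1"
  shows "mset (jordan_shape k) = {#(1, 1)#}
           + (\<Sum>r\<in>{1..k-1}. replicate_mset (2 ^ (k - 1 - r)) (r, 0)) + {#(k, 0)#}"
proof -
  have "mset (map (\<lambda>(r, w). (r, 0::real))
          (concat (map (\<lambda>r. map (\<lambda>i. (r, 2^(k-r) + 2 * i + 1)) [0..<2^(k-r-1)]) [1..<k])))
      = (\<Sum>r\<leftarrow>[1..<k]. replicate_mset (2^(k-r-1)) (r, 0))"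
    by (simp add: map_concat mset_concat o_def map_replicate_const)
  also have "\<dots> = (\<Sum>r\<in>set [1..<k]. replicate_mset (2^(k-r-1)) (r, 0))"
    by (rule interv_sum_list_conv_sum_set_nat)
  also have "set [1..<k] = {1..k-1}" using assms by auto
  finally show ?thesis unfolding jordan_shape_def de_bruijn_chains_def by (simp add: add.commute add.left_commute)
qed

lemma odd_times_two_power_decomp: "(t::nat) > 0 \<Longrightarrow> \<exists>w j. odd w \<and> t = w * 2^j"
proof (induct t rule: less_induct)
  case (less t)
  show ?case
  proof (cases "odd t")
    case True
    then show ?thesis by (intro exI[of _ t] exI[of _ 0]) simp
  next
    case False
    then have "t div 2 < t" "t div 2 > 0" using less(2) by auto
    then obtain w j where "odd w" "t div 2 = w * 2^j" using less(1) by blast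
    then show ?thesis using False by (intro exI[of _ w] exI[of _ "Suc j"]) auto
  qed
qed

lemma mem_de_bruijn_chains:
  assumes w: "odd w" "2^p \<le> w" "w < 2^(p+1)" and p: "p < k"
  shows "(k - p, w) \<in> set (de_bruijn_chains k)"
proof (cases "p = 0")
  case True
  then show ?thesis using w unfolding de_bruijn_chains_def by simp
next
  case False
  then have "even ((2::nat)^p)" by simp
  then have "w \<noteq> 2^p" using w(1) by auto
  then have w_ge: "2^p + 1 \<le> w" using w(2) by simp
  define i where "i = (w - 2^p - 1) div 2"
  have "even (w - 2^p - 1)" using w(1) \<open>even ((2::nat)^p)\<close> w_ge by auto
  then have wi: "w = 2^p + 2 * i + 1" unfolding i_def using w_ge by auto
  have "2 * i + 1 < 2 * 2^(p-1)" using wi w(3) False by (cases p) auto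
  then have "i \<in> set [0..<2^(k-(k-p)-1)]" using p by simp
  then have "(k - p, w) \<in> set (map (\<lambda>i. (k - p, 2^(k-(k-p)) + 2 * i + 1)) [0..<2^(k-(k-p)-1)])"
    using wi p by auto
  moreover have "k - p \<in> set [1..<k]" using p False by auto
  ultimately show ?thesis unfolding de_bruijn_chains_def by auto
qed

lemma mem_jordan_columns:
  assumes k: "k \<ge> 1" and t: "t < 2^k"
  shows "t \<in> fst ` set (jordan_columns k)"
proof (cases "t = 0")
  case False
  then obtain w j where w: "odd w" "t = w * 2^j" using odd_times_two_power_decomp by blast
  then have "w \<ge> 1" by (cases w) auto
  then obtain p where p: "2^p \<le> w" "w < 2^(p+1)" using ex_power_ivl1[of 2 w] by auto
  have "(2::nat)^(p+j) \<le> t" using p(1) w(2) by (simp add: power_add)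
  then have "(2::nat)^(p+j) < 2^k" using t by linarith
  then have pj: "p + j < k" by simp
  define r where "r = k - p"
  have mem: "(r, w) \<in> set (de_bruijn_chains k)"
    unfolding r_def using mem_de_bruijn_chains[OF w(1) p] pj by simp
  define s where "s = r - 1 - j"
  have s: "s < r" "r - 1 - s = j" unfolding s_def r_def using pj by auto
  have "chain_columns (r, w) ! s = (t, s \<noteq> 0)"
    unfolding chain_columns_def using s w(2) by simp
  moreover have "chain_columns (r, w) ! s \<in> set (chain_columns (r, w))"
    by (rule nth_mem) (simp add: length_chain_columns s(1))
  ultimately have "(t, s \<noteq> 0) \<in> set (jordan_columns k)"
    using mem unfolding jordan_columns_def by auto
  then show ?thesis by (rule image_eqI[rotated]) simp
qed (simp add: jordan_columns_def)

lemma jordan_columns_less: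
  assumes k: "k \<ge> 1" and "t \<in> fst ` set (jordan_columns k)"
  shows "t < 2^k"
proof -
  let ?tl = "concat (map chain_columns (de_bruijn_chains k))"
  from assms(2) consider "t = 0" | x where "x \<in> set ?tl" "t = fst x"
    unfolding jordan_columns_def by auto
  then show ?thesis
  proof cases
    case 2
    then obtain j where "j < length ?tl" "x = ?tl ! j" by (metis in_set_conv_nth)
    then show ?thesis using chain_compatible_chains[OF k] 2 unfolding chain_compatible_def by blast
  qed simp
qed

lemma distinct_jordan_columns: "k \<ge> 1 \<Longrightarrow> distinct (map fst (jordan_columns k))"
  and set_jordan_columns: "k \<ge> 1 \<Longrightarrow> set (map fst (jordan_columns k)) = {..<2^k}"
proof -
  assume k: "k \<ge> 1"
  show set: "set (map fst (jordan_columns k)) = {..<2^k}"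
    using mem_jordan_columns[OF k] jordan_columns_less[OF k] by auto
  show "distinct (map fst (jordan_columns k))"
    by (rule card_distinct) (simp only: set length_map length_jordan_columns[OF k] card_lessThan)
qed

lemma jordan_pattern_jordan_shape:
  "jordan_pattern (jordan_shape k)
     = (1, False) # map (\<lambda>(t, f). (0, f)) (concat (map chain_columns (de_bruijn_chains k)))"
proof -
  have "jordan_pattern (map (\<lambda>(r, w). (r, 0::real)) xs)
      = map (\<lambda>(t, f). (0, f)) (concat (map chain_columns xs))" for xs
    by (induct xs) (auto simp: jordan_pattern_def chain_columns_def)
  then show ?thesis unfolding jordan_shape_def jordan_pattern_Cons by simp
qed

lemma jordan_columns_props:
  assumes k: "k \<ge> 1" and c: "c < 2^k"
  shows "jordan_columns k ! 0 = (0, False)"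
    and "fst (jordan_columns k ! c) < 2^k"
    and "snd (jordan_columns k ! c) \<Longrightarrow> 0 < c \<and> fst (jordan_columns k ! (c-1)) = 2 * fst (jordan_columns k ! c)
           \<and> fst (jordan_columns k ! c) < 2^(k-1)"
    and "0 < c \<Longrightarrow> \<not> snd (jordan_columns k ! c) \<Longrightarrow> 2^(k-1) \<le> fst (jordan_columns k ! c)"
proof -
  let ?tl = "concat (map chain_columns (de_bruijn_chains k))"
  have tl: "jordan_columns k ! c = ?tl ! (c - 1)" if "c > 0" for c
    using that unfolding jordan_columns_def by (cases c) auto
  have "length ?tl = 2^k - 1" using length_jordan_columns[OF k] unfolding jordan_columns_def by simp
  then have G: "fst (?tl ! j) < 2^k
     \<and> (snd (?tl ! j) \<longrightarrow> 0 < j \<and> fst (?tl ! (j-1)) = 2 * fst (?tl ! j) \<and> fst (?tl ! j) < 2^(k-1))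
     \<and> (\<not> snd (?tl ! j) \<longrightarrow> 2^(k-1) \<le> fst (?tl ! j))" if "j < 2^k - 1" for j
    using chain_compatible_chains[OF k] that unfolding chain_compatible_def by auto
  show c0: "jordan_columns k ! 0 = (0, False)" unfolding jordan_columns_def by simp
  show "fst (jordan_columns k ! c) < 2^k"
    using G[of "c - 1"] c tl[of c] c0 by (cases "c = 0") auto
  show "0 < c \<and> fst (jordan_columns k ! (c-1)) = 2 * fst (jordan_columns k ! c)
      \<and> fst (jordan_columns k ! c) < 2^(k-1)" if s: "snd (jordan_columns k ! c)"
  proof -
    have "0 < c" using s c0 by (cases c) auto
    moreover have "0 < c - 1" "fst (?tl ! (c-1-1)) = 2 * fst (?tl ! (c-1))" "fst (?tl ! (c-1)) < 2^(k-1)"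
      using G[of "c-1"] c \<open>0 < c\<close> s tl[of c] by auto
    ultimately show ?thesis using tl[of c] tl[of "c-1"] by simp
  qed
  show "2^(k-1) \<le> fst (jordan_columns k ! c)" if "0 < c" "\<not> snd (jordan_columns k ! c)"
    using G[of "c-1"] c that tl[of c] by auto
qed

lemma jordan_pattern_jordan_shape_nth:
  assumes k: "k \<ge> 1" and c: "c < 2^k"
  shows "jordan_pattern (jordan_shape k) ! c = (if c = 0 then 1 else 0, snd (jordan_columns k ! c))"
proof (cases c)
  case (Suc c')
  have "c' < length (concat (map chain_columns (de_bruijn_chains k)))"
    using length_jordan_columns[OF k] c Suc unfolding jordan_columns_def by simp
  then show ?thesis
    unfolding jordan_pattern_jordan_shape Suc jordan_columns_def by (simp add: case_prod_beta)
qed (simp add: jordan_pattern_jordan_shape jordan_columns_def)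

lemma jordan_shape_index:
  assumes k: "k \<ge> 1" and "c' < 2^k" "c < 2^k"
  shows "jordan_matrix (jordan_shape k) $$ (c', c) = (if c' = c then (if c = 0 then 1 else 0)
           else if Suc c' = c \<and> snd (jordan_columns k ! c) then 1 else 0)"
  using jordan_matrix_index[of c' "jordan_shape k" c] sum_list_jordan_shape[OF k] assms
    jordan_pattern_jordan_shape_nth[OF k assms(3)] by simp

section \<open>The orthogonal Walsh basis\<close>

lemma index_mult_mat_sum:
  assumes "A \<in> carrier_mat n m" "B \<in> carrier_mat m p" "i < n" "j < p"
  shows "(A * B) $$ (i, j) = (\<Sum>l<m. A $$ (i, l) * B $$ (l, j))"
  using assms by (simp add: scalar_prod_def atLeast0LessThan)

lemma transpose_conj_eq_if_intertwines:
  fixes U A J :: "'a::comm_ring_1 mat"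
  assumes U: "U \<in> carrier_mat n n" and A: "A \<in> carrier_mat n n" and J: "J \<in> carrier_mat n n"
    and orth: "transpose_mat U * U = 1\<^sub>m n" and AU: "A * U = U * J"
  shows "transpose_mat U * A * U = J"
proof -
  have Ut: "transpose_mat U \<in> carrier_mat n n" using U by simp
  have "transpose_mat U * A * U = transpose_mat U * (U * J)"
    using assoc_mult_mat[OF Ut A U] AU by simp
  also have "\<dots> = (transpose_mat U * U) * J" using assoc_mult_mat[OF Ut U J] by simp
  finally show ?thesis using orth J by simp
qed

lemma similar_mat_transpose_conj:
  fixes U A :: "'a::field mat"
  assumes U: "U \<in> carrier_mat n n" and A: "A \<in> carrier_mat n n"
    and orth: "transpose_mat U * U = 1\<^sub>m n"
  shows "similar_mat A (transpose_mat U * A * U)"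
proof -
  have Ut: "transpose_mat U \<in> carrier_mat n n" using U by simp
  have orth': "U * transpose_mat U = 1\<^sub>m n" by (rule mat_mult_left_right_inverse[OF Ut U orth])
  have "U * (transpose_mat U * A * U) * transpose_mat U = (U * transpose_mat U) * A * (U * transpose_mat U)"
    using U Ut A by (simp add: assoc_mult_mat[of _ n n _ n _ n])
  then have "A = U * (transpose_mat U * A * U) * transpose_mat U" using orth' A by simp
  moreover have "transpose_mat U * A * U \<in> carrier_mat n n" using U A by simp
  ultimately have "similar_mat_wit A (transpose_mat U * A * U) U (transpose_mat U)"
    by (intro similar_mat_witI[OF orth' orth _ A _ U Ut])
  then show ?thesis unfolding similar_mat_def by blast
qed

definition column_character :: "nat \<Rightarrow> nat \<Rightarrow> nat" where
  "column_character k c = fst (jordan_columns k ! c)"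

definition walsh_mat :: "nat \<Rightarrow> real mat" where
  "walsh_mat k = mat (2^k) (2^k) (\<lambda>(a, c). walsh k (column_character k c) a / sqrt (2^k))"

definition doubled_walsh_mat :: "nat \<Rightarrow> real mat" where
  "doubled_walsh_mat k = mat (2^k) (2^k) (\<lambda>(a, c).
     if column_character k c < 2^(k-1) then walsh k (2 * column_character k c) a / sqrt (2^k) else 0)"

definition low_half_diag :: "nat \<Rightarrow> real mat" where
  "low_half_diag k = mat (2^k) (2^k) (\<lambda>(i, j). if i = j \<and> column_character k j < 2^(k-1) then 1 else 0)"

lemma walsh_mat_carrier: "walsh_mat k \<in> carrier_mat (2^k) (2^k)"
  and doubled_walsh_mat_carrier: "doubled_walsh_mat k \<in> carrier_mat (2^k) (2^k)"
  and low_half_diag_carrier: "low_half_diag k \<in> carrier_mat (2^k) (2^k)"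
  unfolding walsh_mat_def doubled_walsh_mat_def low_half_diag_def by simp_all

lemma jordan_shape_carrier: "k \<ge> 1 \<Longrightarrow> jordan_matrix (jordan_shape k) \<in> carrier_mat (2^k) (2^k)"
  using jordan_matrix_carrier[of "jordan_shape k"] sum_list_jordan_shape by simp

lemma map_column_character:
  "k \<ge> 1 \<Longrightarrow> map (column_character k) [0..<2^k] = map fst (jordan_columns k)"
  by (rule nth_equalityI) (simp_all add: length_jordan_columns column_character_def)

lemma column_character_less: "k \<ge> 1 \<Longrightarrow> c < 2^k \<Longrightarrow> column_character k c < 2^k"
  unfolding column_character_def by (rule jordan_columns_props(2))

lemma column_character_eq_iff:
  assumes "k \<ge> 1" "c < 2^k" "c' < 2^k"
  shows "column_character k c = column_character k c' \<longleftrightarrow> c = c'"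
  using nth_eq_iff_index_eq[OF distinct_jordan_columns[OF assms(1)]] assms
  unfolding column_character_def by (simp add: length_jordan_columns)

lemma walsh_mat_orthogonal:
  assumes k: "k \<ge> 1"
  shows "transpose_mat (walsh_mat k) * walsh_mat k = 1\<^sub>m (2^k)"
proof (rule eq_matI)
  fix c c' assume "c < dim_row (1\<^sub>m (2^k))" "c' < dim_col (1\<^sub>m (2^k))"
  then have cc: "c < 2^k" "c' < 2^k" by auto
  have "(transpose_mat (walsh_mat k) * walsh_mat k) $$ (c, c')
      = (\<Sum>a<2^k. transpose_mat (walsh_mat k) $$ (c, a) * walsh_mat k $$ (a, c'))"
    by (rule index_mult_mat_sum) (use cc walsh_mat_carrier in auto)
  also have "\<dots> = (\<Sum>a<2^k. walsh k (column_character k c) a * walsh k (column_character k c') a) / 2^k"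
    unfolding sum_divide_distrib by (rule sum.cong[OF refl]) (use cc in \<open>simp add: walsh_mat_def\<close>)
  also have "\<dots> = 1\<^sub>m (2^k) $$ (c, c')"
    using walsh_orthogonal[OF column_character_less[OF k cc(1)] column_character_less[OF k cc(2)]]
      column_character_eq_iff[OF k cc] cc by simp
  finally show "(transpose_mat (walsh_mat k) * walsh_mat k) $$ (c, c') = 1\<^sub>m (2^k) $$ (c, c')" .
qed (auto simp: walsh_mat_def)

lemma de_bruijn_mult_walsh_mat:
  assumes k: "k \<ge> 1"
  shows "de_bruijn k * walsh_mat k = doubled_walsh_mat k"
proof (rule eq_matI)
  fix a c assume "a < dim_row (doubled_walsh_mat k)" "c < dim_col (doubled_walsh_mat k)"
  then have ac: "a < 2^k" "c < 2^k" by (auto simp: doubled_walsh_mat_def)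
  obtain k' where k': "k = Suc k'" using k by (cases k) auto
  have "(de_bruijn k * walsh_mat k) $$ (a, c) = (\<Sum>l<2^k. de_bruijn k $$ (a, l) * walsh_mat k $$ (l, c))"
    using ac de_bruijn_carrier walsh_mat_carrier by (rule_tac index_mult_mat_sum) auto
  also have "\<dots> = (\<Sum>l<2^k. de_bruijn_fun k a l * walsh k (column_character k c) l) / sqrt (2^k)"
    unfolding sum_divide_distrib
    by (rule sum.cong[OF refl]) (use ac de_bruijn_index[OF k] in \<open>simp add: walsh_mat_def\<close>)
  also have "\<dots> = doubled_walsh_mat k $$ (a, c)"
    using de_bruijn_fun_walsh[of a k' "column_character k c"] column_character_less[OF k ac(2)] ac
    unfolding k' by (simp add: doubled_walsh_mat_def)
  finally show "(de_bruijn k * walsh_mat k) $$ (a, c) = doubled_walsh_mat k $$ (a, c)" .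
qed (auto simp: doubled_walsh_mat_def walsh_mat_def de_bruijn_carrier[THEN carrier_matD(1)])

lemma walsh_mat_mult_jordan:
  assumes k: "k \<ge> 1"
  shows "walsh_mat k * jordan_matrix (jordan_shape k) = doubled_walsh_mat k"
proof (rule eq_matI)
  fix a c assume "a < dim_row (doubled_walsh_mat k)" "c < dim_col (doubled_walsh_mat k)"
  then have ac: "a < 2^k" "c < 2^k" by (auto simp: doubled_walsh_mat_def)
  let ?J = "jordan_matrix (jordan_shape k)" and ?U = "walsh_mat k"
  note J = jordan_shape_index[OF k _ ac(2)]
  have "(?U * ?J) $$ (a, c) = (\<Sum>c'<2^k. ?U $$ (a, c') * ?J $$ (c', c))"
    using ac jordan_shape_carrier[OF k] walsh_mat_carrier by (rule_tac index_mult_mat_sum) auto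
  also have "\<dots> = doubled_walsh_mat k $$ (a, c)"
  proof -
    consider "c = 0" | "c \<noteq> 0" "snd (jordan_columns k ! c)" | "c \<noteq> 0" "\<not> snd (jordan_columns k ! c)"
      by blast
    then show ?thesis
    proof cases
      case 1
      have "(\<Sum>c'<2^k. ?U $$ (a, c') * ?J $$ (c', c)) = (\<Sum>c'<2^k. if c' = 0 then ?U $$ (a, c') else 0)"
        by (rule sum.cong[OF refl]) (use J 1 in auto)
      then show ?thesis using 1 ac jordan_columns_props(1)[OF k ac(2)] k
        by (simp add: walsh_mat_def doubled_walsh_mat_def column_character_def)
    next
      case 2
      have "(\<Sum>c'<2^k. ?U $$ (a, c') * ?J $$ (c', c)) = (\<Sum>c'<2^k. if c' = c - 1 then ?U $$ (a, c') else 0)"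
        by (rule sum.cong[OF refl]) (use J 2 in auto)
      then show ?thesis using ac 2 jordan_columns_props(3)[OF k ac(2)]
        by (simp add: walsh_mat_def doubled_walsh_mat_def column_character_def)
    next
      case 3
      have "(\<Sum>c'<2^k. ?U $$ (a, c') * ?J $$ (c', c)) = 0"
        by (rule sum.neutral) (use J 3 in auto)
      then show ?thesis using ac 3 jordan_columns_props(4)[OF k ac(2)]
        by (simp add: doubled_walsh_mat_def column_character_def)
    qed
  qed
  finally show "(?U * ?J) $$ (a, c) = doubled_walsh_mat k $$ (a, c)" .
qed (auto simp: doubled_walsh_mat_def walsh_mat_def sum_list_jordan_shape[OF k])

lemma transpose_de_bruijn_mult_doubled_walsh_mat:
  assumes k: "k \<ge> 1"
  shows "transpose_mat (de_bruijn k) * doubled_walsh_mat k = walsh_mat k * low_half_diag k"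
proof (rule eq_matI)
  fix a c assume "a < dim_row (walsh_mat k * low_half_diag k)" "c < dim_col (walsh_mat k * low_half_diag k)"
  then have ac: "a < 2^k" "c < 2^k" by (auto simp: walsh_mat_def low_half_diag_def)
  obtain k' where k': "k = Suc k'" using k by (cases k) auto
  let ?t = "column_character k c"
  have "(transpose_mat (de_bruijn k) * doubled_walsh_mat k) $$ (a, c)
      = (\<Sum>b<2^k. transpose_mat (de_bruijn k) $$ (a, b) * doubled_walsh_mat k $$ (b, c))"
    by (rule index_mult_mat_sum) (use ac de_bruijn_carrier doubled_walsh_mat_carrier in auto)
  also have "\<dots> = (\<Sum>b<2^k. de_bruijn k $$ (b, a) * doubled_walsh_mat k $$ (b, c))"
    by (rule sum.cong[OF refl]) (use ac de_bruijn_carrier[of k] in simp)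
  also have "\<dots> = (if ?t < 2^(k-1) then (\<Sum>b<2^k. de_bruijn_fun k b a * walsh k (2 * ?t) b) / sqrt (2^k) else 0)"
    using ac by (simp add: de_bruijn_index[OF k] doubled_walsh_mat_def sum_divide_distrib)
  also have "\<dots> = (if ?t < 2^(k-1) then walsh k ?t a / sqrt (2^k) else 0)"
    using de_bruijn_fun_transpose_walsh[of a k' "2 * ?t"] ac unfolding k' by auto
  also have "\<dots> = walsh_mat k $$ (a, c) * (if ?t < 2^(k-1) then 1 else 0)"
    using ac by (simp add: walsh_mat_def)
  also have "\<dots> = (\<Sum>c'<2^k. walsh_mat k $$ (a, c') * low_half_diag k $$ (c', c))"
  proof -
    have "(\<Sum>c'<2^k. walsh_mat k $$ (a, c') * low_half_diag k $$ (c', c))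
        = (\<Sum>c'<2^k. if c' = c then walsh_mat k $$ (a, c) * (if ?t < 2^(k-1) then 1 else 0) else 0)"
      by (rule sum.cong[OF refl]) (use ac in \<open>auto simp: low_half_diag_def\<close>)
    then show ?thesis using ac by simp
  qed
  also have "\<dots> = (walsh_mat k * low_half_diag k) $$ (a, c)"
    using ac walsh_mat_carrier low_half_diag_carrier by (rule_tac index_mult_mat_sum[symmetric]) auto
  finally show "(transpose_mat (de_bruijn k) * doubled_walsh_mat k) $$ (a, c)
      = (walsh_mat k * low_half_diag k) $$ (a, c)" .
qed (auto simp: doubled_walsh_mat_def walsh_mat_def low_half_diag_def de_bruijn_carrier[THEN carrier_matD(2)])

lemma walsh_mat_conj_de_bruijn:
  "k \<ge> 1 \<Longrightarrow> transpose_mat (walsh_mat k) * de_bruijn k * walsh_mat k = jordan_matrix (jordan_shape k)"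
  by (rule transpose_conj_eq_if_intertwines[OF walsh_mat_carrier de_bruijn_carrier jordan_shape_carrier])
    (simp_all add: walsh_mat_orthogonal de_bruijn_mult_walsh_mat walsh_mat_mult_jordan)

lemma walsh_mat_conj_gram_de_bruijn:
  assumes k: "k \<ge> 1"
  shows "transpose_mat (walsh_mat k) * (transpose_mat (de_bruijn k) * de_bruijn k) * walsh_mat k
       = low_half_diag k"
proof (rule transpose_conj_eq_if_intertwines[OF walsh_mat_carrier _ low_half_diag_carrier])
  show "transpose_mat (de_bruijn k) * de_bruijn k \<in> carrier_mat (2^k) (2^k)"
    by (rule mult_carrier_mat[OF _ de_bruijn_carrier]) (use de_bruijn_carrier[of k] in simp)
  show "transpose_mat (de_bruijn k) * de_bruijn k * walsh_mat k = walsh_mat k * low_half_diag k"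
    using assoc_mult_mat[of "transpose_mat (de_bruijn k)" "2^k" "2^k" "de_bruijn k" "2^k" "walsh_mat k" "2^k"]
      de_bruijn_carrier walsh_mat_carrier de_bruijn_mult_walsh_mat[OF k]
      transpose_de_bruijn_mult_doubled_walsh_mat[OF k]
    by simp
qed (rule walsh_mat_orthogonal[OF k])

section \<open>Eigenvalues and singular values\<close>

lemma proots_prod_list_linear: "proots (\<Prod>a\<leftarrow>xs. [:- a, 1:]) = mset (xs :: 'a::idom list)"
proof (induct xs)
  case (Cons a xs)
  have "proots (\<Prod>x\<leftarrow>a # xs. [:- x, 1:]) = proots ([:- a, 1:] * (\<Prod>x\<leftarrow>xs. [:- x, 1:]))"
    by (simp only: list.map prod_list.Cons)
  also have "\<dots> = proots [:- a, 1:] + proots (\<Prod>x\<leftarrow>xs. [:- x, 1:])"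
    by (rule proots_mult) (auto simp: prod_list_zero_iff)
  finally show ?case using Cons by simp
qed simp

lemma eigenvalues_mset_eq_of_char_poly:
  assumes "M \<in> carrier_mat n n" "char_poly M = (\<Prod>a\<leftarrow>xs. [:- a, 1:])"
  shows "eigenvalues_mset M = mset (map complex_of_real xs)"
proof -
  interpret of_real_poly: map_poly_comm_ring_hom "of_real :: real \<Rightarrow> complex" ..
  have linear: "map_poly complex_of_real [:- a, 1:] = [:- complex_of_real a, 1:]" for a
    by (simp add: map_poly_pCons)
  have "map_poly complex_of_real (\<Prod>a\<leftarrow>xs. [:- a, 1:]) = (\<Prod>a\<leftarrow>map complex_of_real xs. [:- a, 1:])"
    by (induct xs) (simp_all only: list.map prod_list.Nil prod_list.Cons of_real_poly.hom_mult
        of_real_poly.hom_one linear)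
  then show ?thesis
    unfolding eigenvalues_mset_def of_real_hom.char_poly_hom[OF assms(1)] assms(2)
    by (simp only: proots_prod_list_linear)
qed

lemma prod_list_power_fst: "(\<Prod>(r, w)\<leftarrow>xs. p ^ r) = p ^ sum_list (map fst xs)"
  by (induct xs) (auto simp: power_add)

lemma char_poly_jordan_shape:
  assumes "k \<ge> 1"
  shows "char_poly (jordan_matrix (jordan_shape k)) = (\<Prod>a\<leftarrow>1 # replicate (2^k - 1) 0. [:- a, 1:])"
proof -
  have "map (\<lambda>(n, a). [:- a, 1:] ^ n) (jordan_shape k)
      = [:-1, 1:] # map (\<lambda>(r, w). [:0::real, 1:] ^ r) (de_bruijn_chains k)"
    unfolding jordan_shape_def by (auto simp: case_prod_beta)
  then have "char_poly (jordan_matrix (jordan_shape k)) = [:-1, 1:] * [:0, 1:] ^ (2^k - 1)"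
    unfolding jordan_matrix_char_poly
    by (simp only: prod_list.Cons prod_list_power_fst sum_list_chain_lengths[OF assms])
  then show ?thesis by (simp add: prod_list_replicate)
qed

lemma eigenvalues_mset_de_bruijn:
  assumes k: "k \<ge> 1"
  shows "eigenvalues_mset (de_bruijn k) = {#1#} + replicate_mset (2^k - 1) 0"
proof -
  have "char_poly (de_bruijn k) = char_poly (jordan_matrix (jordan_shape k))"
    using char_poly_similar[OF similar_mat_transpose_conj[OF walsh_mat_carrier de_bruijn_carrier
        walsh_mat_orthogonal[OF k]]] walsh_mat_conj_de_bruijn[OF k] by simp
  then have "eigenvalues_mset (de_bruijn k) = mset (map complex_of_real (1 # replicate (2^k - 1) 0))"
    by (intro eigenvalues_mset_eq_of_char_poly[OF de_bruijn_carrier]) (simp only: char_poly_jordan_shape[OF k])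
  then show ?thesis by simp
qed

lemma mset_map_column_character:
  assumes k: "k \<ge> 1"
  shows "mset (map (column_character k) [0..<2^k]) = mset [0..<2^k]"
proof -
  have "set (map fst (jordan_columns k)) = set [0..<2^k]"
    using set_jordan_columns[OF k] by (simp add: lessThan_atLeast0)
  then show ?thesis
    unfolding map_column_character[OF k]
    using set_eq_iff_mset_eq_distinct[OF distinct_jordan_columns[OF k] distinct_upt] by blast
qed

lemma mset_indicator_lower_half:
  assumes k: "k \<ge> 1"
  shows "mset (map (\<lambda>t::nat. if t < 2^(k-1) then 1 else (0::real)) [0..<2^k])
       = replicate_mset (2^(k-1)) 1 + replicate_mset (2^(k-1)) 0"
proof -
  have "(2::nat)^k = 2^(k-1) + 2^(k-1)" using k by (cases k) auto
  then have "[0..<2^k] = [0..<2^(k-1)] @ [2^(k-1)..<2^(k-1) + 2^(k-1)]"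
    by (simp only: upt_add_eq_append[OF le0])
  moreover have "map (\<lambda>t::nat. if t < 2^(k-1) then 1 else (0::real)) [0..<2^(k-1)] = replicate (2^(k-1)) 1"
    by (rule trans[OF map_cong[OF refl, of _ _ "\<lambda>_. 1"]]) (auto simp: map_replicate_const)
  moreover have "map (\<lambda>t::nat. if t < 2^(k-1) then 1 else (0::real)) [2^(k-1)..<2^(k-1) + 2^(k-1)]
      = replicate (2^(k-1)) 0"
    by (rule trans[OF map_cong[OF refl, of _ _ "\<lambda>_. 0"]]) (auto simp: map_replicate_const)
  ultimately show ?thesis by simp
qed

lemma singular_values_de_bruijn:
  assumes k: "k \<ge> 1"
  shows "singular_values (de_bruijn k) = replicate_mset (2^k div 2) 1 + replicate_mset (2^k div 2) 0"
proof -
  let ?G = "transpose_mat (de_bruijn k) * de_bruijn k"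
  let ?low = "\<lambda>t::nat. if t < 2^(k-1) then 1 else (0::real)"
  have G: "?G \<in> carrier_mat (2^k) (2^k)"
    by (rule mult_carrier_mat[OF _ de_bruijn_carrier]) (use de_bruijn_carrier[of k] in simp)
  have "char_poly ?G = char_poly (low_half_diag k)"
    using char_poly_similar[OF similar_mat_transpose_conj[OF walsh_mat_carrier G walsh_mat_orthogonal[OF k]]]
      walsh_mat_conj_gram_de_bruijn[OF k] by simp
  also have "\<dots> = (\<Prod>a\<leftarrow>diag_mat (low_half_diag k). [:- a, 1:])"
    by (rule char_poly_upper_triangular[OF low_half_diag_carrier])
      (auto simp: upper_triangular_def low_half_diag_def)
  also have "diag_mat (low_half_diag k) = map ?low (map (column_character k) [0..<2^k])"
    by (simp add: diag_mat_def low_half_diag_def)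
  finally have "eigenvalues_mset ?G = mset (map complex_of_real (map ?low (map (column_character k) [0..<2^k])))"
    by (rule eigenvalues_mset_eq_of_char_poly[OF G])
  then have "singular_values (de_bruijn k) = image_mset ?low (mset (map (column_character k) [0..<2^k]))"
    unfolding singular_values_def by (simp add: image_mset.compositionality o_def if_distrib cong: if_cong)
  also have "\<dots> = replicate_mset (2^(k-1)) 1 + replicate_mset (2^(k-1)) 0"
    using mset_indicator_lower_half[OF k] unfolding mset_map_column_character[OF k] by simp
  also have "(2::nat)^(k-1) = 2^k div 2" using k by (cases k) auto
  finally show ?thesis .
qed

lemma re_lambda2_de_bruijn:
  assumes "k \<ge> 1"
  shows "re_lambda2 (de_bruijn k) = 0"
proof -
  have "(2::nat) \<le> 2^k" using assms by (cases k) auto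
  then show ?thesis unfolding re_lambda2_def eigenvalues_mset_de_bruijn[OF assms] by simp
qed

lemma Gamma_le_de_bruijn:
  assumes k: "k \<ge> 1"
  shows "Gamma (2^k) \<le> ereal (8 / real k)"
proof -
  have "Gamma (2^k) \<le> ereal (edge_expansion (de_bruijn k))"
    unfolding Gamma_def using de_bruijn_doubly_stochastic[OF k] re_lambda2_de_bruijn[OF k]
    by (intro INF_lower2[of "de_bruijn k"]) auto
  also have "\<dots> \<le> ereal (8 / real k)" using edge_expansion_de_bruijn_le[OF k] by simp
  finally show ?thesis .
qed

theorem lemma4p10:
  fixes k :: nat
  assumes "k \<ge> 1"
  defines "n \<equiv> (2::nat) ^ k"
  defines "A \<equiv> de_bruijn k"
  shows "1 / (2 * log 2 (real n)) \<le> edge_expansion A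
         \<and> edge_expansion A \<le> 8 / log 2 (real n)
         \<and> doubly_stochastic n A
         \<and> eigenvalues_mset A = {#1#} + replicate_mset (n - 1) 0
         \<and> Gamma n \<le> ereal (8 / log 2 (real n))
         \<and> (\<exists>U n_as. U \<in> carrier_mat n n \<and> transpose_mat U * U = 1\<^sub>m n
           \<and> mset n_as = {#(1, 1)#}
               + (\<Sum>r\<in>{1..k-1}. replicate_mset (2 ^ (k - 1 - r)) (r, 0))
               + {#(k, 0)#}
           \<and> transpose_mat U * A * U = jordan_matrix n_as)
         \<and> singular_values A = replicate_mset (n div 2) 1 + replicate_mset (n div 2) 0"
proof -
  have "log 2 (real n) = real k" unfolding n_def by (simp add: log_nat_power)
  moreover have "\<exists>U n_as. U \<in> carrier_mat n n \<and> transpose_mat U * U = 1\<^sub>m n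
           \<and> mset n_as = {#(1, 1)#}
               + (\<Sum>r\<in>{1..k-1}. replicate_mset (2 ^ (k - 1 - r)) (r, 0))
               + {#(k, 0)#}
           \<and> transpose_mat U * A * U = jordan_matrix n_as"
    unfolding n_def A_def
    using walsh_mat_carrier walsh_mat_orthogonal[OF assms(1)] mset_jordan_shape[OF assms(1)]
      walsh_mat_conj_de_bruijn[OF assms(1)] by blast
  ultimately show ?thesis
    unfolding n_def A_def
    using edge_expansion_de_bruijn_ge[OF assms(1)] edge_expansion_de_bruijn_le[OF assms(1)]
      de_bruijn_doubly_stochastic[OF assms(1)] eigenvalues_mset_de_bruijn[OF assms(1)]
      Gamma_le_de_bruijn[OF assms(1)] singular_values_de_bruijn[OF assms(1)]
    by simp
qed

end
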